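(* Let $X$ be a 2-complex and $N$ a positive integer such that every face (2-cell) of $X$ has at most $N$ edges. Suppose there is $\kappa>1/N$ such that $X$ satisfies a linear isoperimetric inequality for large-area loops: every edge loop $\gamma$ in $X$ of length $n$ whose area is at least $18\kappa^2N^2$ can be filled with at most $\kappa n$ cells. Then every geodesic triangle in the one-skeleton of $X$ is $\delta$-thin for $\delta=120\kappa^2N^3$.
   Context: The area of an edge loop is the minimal number of 2-cells in a combinatorial (van Kampen) filling of the loop in $X$. A geodesic triangle in a graph is $\delta$-thin if each side is contained in the $\delta$-neighbourhood of the union of the other two sides. *)

theory Defs
  imports Complex_Main "HOL-Library.Extended_Real"
begin

text \<open>A combinatorial 2-complex: vertices, edges (with possibly equal endpoints,
  multiple edges allowed), and faces (2-cells) attached along closed edge paths.\<close>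

record ('v,'e,'f) cx =
  verts :: "'v set"
  edges :: "'e set"
  ends  :: "'e \<Rightarrow> 'v \<times> 'v"
  faces :: "'f set"
  bdry  :: "'f \<Rightarrow> ('e \<times> bool) list"

text \<open>Oriented edges (darts): (e, True) runs from fst (ends e) to snd (ends e).\<close>

definition dsrc :: "('v,'e,'f) cx \<Rightarrow> 'e \<times> bool \<Rightarrow> 'v" where
  "dsrc X d = (if snd d then fst (ends X (fst d)) else snd (ends X (fst d)))"

definition dtgt :: "('v,'e,'f) cx \<Rightarrow> 'e \<times> bool \<Rightarrow> 'v" where
  "dtgt X d = (if snd d then snd (ends X (fst d)) else fst (ends X (fst d)))"

definition dinv :: "'e \<times> bool \<Rightarrow> 'e \<times> bool" where
  "dinv d = (fst d, \<not> snd d)"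

definition is_path :: "('v,'e,'f) cx \<Rightarrow> ('e \<times> bool) list \<Rightarrow> bool" where
  "is_path X p \<longleftrightarrow> fst ` set p \<subseteq> edges X \<and>
     (\<forall>i. Suc i < length p \<longrightarrow> dtgt X (p ! i) = dsrc X (p ! Suc i))"

definition path_from :: "('v,'e,'f) cx \<Rightarrow> 'v \<Rightarrow> 'v \<Rightarrow> ('e \<times> bool) list \<Rightarrow> bool" where
  "path_from X u v p \<longleftrightarrow> u \<in> verts X \<and> is_path X p \<and>
     (p = [] \<longrightarrow> u = v) \<and> (p \<noteq> [] \<longrightarrow> dsrc X (hd p) = u \<and> dtgt X (last p) = v)"

definition is_loop :: "('v,'e,'f) cx \<Rightarrow> ('e \<times> bool) list \<Rightarrow> bool" where
  "is_loop X p \<longleftrightarrow> is_path X p \<and> (p \<noteq> [] \<longrightarrow> dsrc X (hd p) = dtgt X (last p))"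

definition two_complex :: "('v,'e,'f) cx \<Rightarrow> bool" where
  "two_complex X \<longleftrightarrow> (\<forall>e\<in>edges X. fst (ends X e) \<in> verts X \<and> snd (ends X e) \<in> verts X)
     \<and> (\<forall>f\<in>faces X. is_loop X (bdry X f))"

definition face_loops :: "('v,'e,'f) cx \<Rightarrow> ('e \<times> bool) list set" where
  "face_loops X = {rotate k (bdry X f) | k f. f \<in> faces X}
                \<union> {rotate k (rev (map dinv (bdry X f))) | k f. f \<in> faces X}"

text \<open>fills X k p: the edge path p can be transformed into the empty path by
  inserting/deleting backtracks (free) and inserting k face-boundary loops
  (combinatorial null-homotopy; by van Kampen's lemma this is equivalent to the
  existence of a van Kampen diagram with k 2-cells).\<close>

inductive fills :: "('v,'e,'f) cx \<Rightarrow> nat \<Rightarrow> ('e \<times> bool) list \<Rightarrow> bool" for X where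
  fills_nil: "fills X 0 []"
| fills_del: "fills X k (u @ w) \<Longrightarrow> fills X k (u @ [d, dinv d] @ w)"
| fills_ins: "is_path X (u @ [d, dinv d] @ w) \<Longrightarrow> fills X k (u @ [d, dinv d] @ w)
               \<Longrightarrow> fills X k (u @ w)"
| fills_face: "c \<in> face_loops X \<Longrightarrow> is_path X (u @ c @ w) \<Longrightarrow> fills X k (u @ c @ w)
               \<Longrightarrow> fills X (Suc k) (u @ w)"

definition area :: "('v,'e,'f) cx \<Rightarrow> ('e \<times> bool) list \<Rightarrow> ereal" where
  "area X \<gamma> = Inf {ereal (real k) | k. fills X k \<gamma>}"

definition gdist :: "('v,'e,'f) cx \<Rightarrow> 'v \<Rightarrow> 'v \<Rightarrow> ereal" where
  "gdist X u v = Inf {ereal (real (length p)) | p. path_from X u v p}"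

definition geodesic :: "('v,'e,'f) cx \<Rightarrow> 'v \<Rightarrow> 'v \<Rightarrow> ('e \<times> bool) list \<Rightarrow> bool" where
  "geodesic X u v p \<longleftrightarrow> path_from X u v p \<and> ereal (real (length p)) = gdist X u v"

text \<open>Points of the one-skeleton as a metric graph (edges of length 1):
  vertices, and interior points of edges at parameter t measured from fst (ends e).\<close>

datatype ('v,'e) pt = Vx 'v | Ip 'e real

definition anchors :: "('v,'e,'f) cx \<Rightarrow> ('v,'e) pt \<Rightarrow> ('v \<times> real) set" where
  "anchors X x = (case x of Vx v \<Rightarrow> {(v, 0)}
                   | Ip e t \<Rightarrow> {(fst (ends X e), t), (snd (ends X e), 1 - t)})"

definition pdist :: "('v,'e,'f) cx \<Rightarrow> ('v,'e) pt \<Rightarrow> ('v,'e) pt \<Rightarrow> ereal" where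
  "pdist X x y = min
     (case (x, y) of (Ip e s, Ip e' t) \<Rightarrow> (if e = e' then ereal \<bar>s - t\<bar> else \<infinity>) | _ \<Rightarrow> \<infinity>)
     (Inf {ereal o1 + gdist X a b + ereal o2 | a o1 b o2.
             (a, o1) \<in> anchors X x \<and> (b, o2) \<in> anchors X y})"

definition path_pts :: "('v,'e,'f) cx \<Rightarrow> 'v \<Rightarrow> ('e \<times> bool) list \<Rightarrow> ('v,'e) pt set" where
  "path_pts X u p = {Vx u} \<union> {Vx (dsrc X d) | d. d \<in> set p} \<union> {Vx (dtgt X d) | d. d \<in> set p}
                    \<union> {Ip (fst d) t | d t. d \<in> set p \<and> 0 < t \<and> t < 1}"

definition geodesic_triangle ::
  "('v,'e,'f) cx \<Rightarrow> 'v \<Rightarrow> 'v \<Rightarrow> 'v \<Rightarrow> ('e \<times> bool) list \<Rightarrow> ('e \<times> bool) list \<Rightarrow> ('e \<times> bool) list \<Rightarrow> bool" where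
  "geodesic_triangle X a b c pab pbc pca \<longleftrightarrow>
     geodesic X a b pab \<and> geodesic X b c pbc \<and> geodesic X c a pca"

definition thin_triangle ::
  "('v,'e,'f) cx \<Rightarrow> real \<Rightarrow> 'v \<Rightarrow> 'v \<Rightarrow> 'v \<Rightarrow> ('e \<times> bool) list \<Rightarrow> ('e \<times> bool) list \<Rightarrow> ('e \<times> bool) list \<Rightarrow> bool" where
  "thin_triangle X \<delta> a b c pab pbc pca \<longleftrightarrow>
     (\<forall>x\<in>path_pts X a pab. \<exists>y\<in>path_pts X b pbc \<union> path_pts X c pca. pdist X x y \<le> ereal \<delta>) \<and>
     (\<forall>x\<in>path_pts X b pbc. \<exists>y\<in>path_pts X c pca \<union> path_pts X a pab. pdist X x y \<le> ereal \<delta>) \<and>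
     (\<forall>x\<in>path_pts X c pca. \<exists>y\<in>path_pts X a pab \<union> path_pts X b pbc. pdist X x y \<le> ereal \<delta>)"

end

theory Submission
  imports Defs
begin

text \<open>The isoperimetric hypothesis is used only through the trapezoidal line integral \<open>\<integral> g df\<close>
  of two 1-Lipschitz functions on vertices: it is unchanged by backtracks and a face contributes
  at most \<open>N\<^sup>2/2\<close>, so on every loop \<open>\<gamma>\<close> it is at most \<open>max (9M\<^sup>2) (M |\<gamma>| / 2)\<close> with \<open>M = \<kappa>N\<^sup>2\<close>.
  Let \<open>f\<close> be the distance to a vertex \<open>z = \<alpha>(t0)\<close> of a geodesic \<open>\<alpha>\<close>, truncated at \<open>R\<close>, and \<open>g\<close>
  the distance to the start of \<open>\<alpha>\<close>. Along \<open>\<alpha>\<close> from \<open>t0 - R\<close> to \<open>t0 + R\<close> the integral is \<open>R\<^sup>2\<close>,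
  while it vanishes on any path avoiding the \<open>R\<close>-ball about \<open>z\<close>; so short detours around that
  ball force \<open>R = O(M)\<close>. For \<open>z\<close> the point of one side of a geodesic triangle farthest from
  the other two, detours are built along the other two sides, with one shortcut near the
  opposite corner obtained from the same estimate for a triangle with a short side. This
  bounds the distance by \<open>15M\<close>, and \<open>1 + 15M \<le> 120\<kappa>\<^sup>2N\<^sup>3\<close>.\<close>

section \<open>Edge paths and the vertex metric\<close>

definition reachable :: "('v,'e,'f) cx \<Rightarrow> 'v \<Rightarrow> 'v \<Rightarrow> bool" where
  "reachable X u v \<longleftrightarrow> (\<exists>p. path_from X u v p)"

text \<open>\<open>vdist\<close> is \<open>0\<close> for vertices in different components, so its metric properties need
  \<open>reachable\<close> hypotheses.\<close>

definition vdist :: "('v,'e,'f) cx \<Rightarrow> 'v \<Rightarrow> 'v \<Rightarrow> nat" where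
  "vdist X u v = (LEAST n. \<exists>p. path_from X u v p \<and> length p = n)"

definition geod :: "('v,'e,'f) cx \<Rightarrow> 'v \<Rightarrow> 'v \<Rightarrow> ('e \<times> bool) list \<Rightarrow> bool" where
  "geod X u v p \<longleftrightarrow> path_from X u v p \<and> length p = vdist X u v"

text \<open>Vertex number \<open>i\<close> of \<open>p\<close> started at \<open>u\<close>, vertex \<open>0\<close> being \<open>u\<close>; meaningful for \<open>i \<le> length p\<close>.\<close>

definition pvert :: "('v,'e,'f) cx \<Rightarrow> 'v \<Rightarrow> ('e \<times> bool) list \<Rightarrow> nat \<Rightarrow> 'v" where
  "pvert X u p i = (if i = 0 then u else dtgt X (p ! (i - 1)))"

definition path_verts :: "('v,'e,'f) cx \<Rightarrow> 'v \<Rightarrow> ('e \<times> bool) list \<Rightarrow> 'v set" where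
  "path_verts X u p = pvert X u p ` {..length p}"

definition rev_path :: "('e \<times> bool) list \<Rightarrow> ('e \<times> bool) list" where
  "rev_path p = rev (map dinv p)"

lemma dsrc_dinv [simp]: "dsrc X (dinv d) = dtgt X d"
  by (cases d) (simp add: dsrc_def dtgt_def dinv_def)

lemma dtgt_dinv [simp]: "dtgt X (dinv d) = dsrc X d"
  by (cases d) (simp add: dsrc_def dtgt_def dinv_def)

lemma dinv_dinv [simp]: "dinv (dinv d) = d"
  by (simp add: dinv_def)

lemma rev_path_rev_path [simp]: "rev_path (rev_path p) = p"
  by (simp add: rev_path_def rev_map comp_def)

lemma length_rev_path [simp]: "length (rev_path p) = length p"
  by (simp add: rev_path_def)

lemma pvert_0 [simp]: "pvert X u p 0 = u"
  by (simp add: pvert_def)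

lemma pvert_Suc: "pvert X u p (Suc i) = dtgt X (p ! i)"
  by (simp add: pvert_def)

lemma path_from_iff:
  "path_from X u v p \<longleftrightarrow> u \<in> verts X \<and> fst ` set p \<subseteq> edges X \<and>
     (\<forall>i<length p. dsrc X (p ! i) = pvert X u p i) \<and> pvert X u p (length p) = v"
proof (cases p)
  case Nil
  then show ?thesis by (auto simp: path_from_def is_path_def)
next
  case (Cons d q)
  have "(\<forall>i. Suc i < length p \<longrightarrow> dtgt X (p ! i) = dsrc X (p ! Suc i)) \<and> dsrc X (hd p) = u
      \<longleftrightarrow> (\<forall>i<length p. dsrc X (p ! i) = pvert X u p i)"
    using Cons by (auto simp: pvert_def less_Suc_eq_0_disj)
  moreover have "dtgt X (last p) = pvert X u p (length p)"
    using Cons by (simp add: pvert_def last_conv_nth)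
  ultimately show ?thesis
    using Cons by (auto simp: path_from_def is_path_def)
qed

lemma path_from_pvert_end: "path_from X u v p \<Longrightarrow> pvert X u p (length p) = v"
  by (simp add: path_from_iff)

lemma path_from_dsrc: "path_from X u v p \<Longrightarrow> i < length p \<Longrightarrow> dsrc X (p ! i) = pvert X u p i"
  by (simp add: path_from_iff)

lemma pvert_take: "k \<le> i \<Longrightarrow> i \<le> length p \<Longrightarrow> pvert X u (take i p) k = pvert X u p k"
  by (auto simp: pvert_def)

lemma pvert_drop: "i + k \<le> length p \<Longrightarrow> pvert X (pvert X u p i) (drop i p) k = pvert X u p (i + k)"
  by (cases k) (auto simp: pvert_def)

lemma pvert_append_left: "k \<le> length p \<Longrightarrow> pvert X u (p @ q) k = pvert X u p k"
  by (auto simp: pvert_def nth_append)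

lemma pvert_append_right: "pvert X u (p @ q) (length p + k) = pvert X (pvert X u p (length p)) q k"
  by (cases k) (auto simp: pvert_def nth_append)

lemma path_from_take: "path_from X u v p \<Longrightarrow> i \<le> length p \<Longrightarrow> path_from X u (pvert X u p i) (take i p)"
  unfolding path_from_iff by (auto simp: pvert_take dest: in_set_takeD)

lemma path_from_append: "path_from X u v p \<Longrightarrow> path_from X v w q \<Longrightarrow> path_from X u w (p @ q)"
proof -
  assume p: "path_from X u v p" and q: "path_from X v w q"
  have "dsrc X ((p @ q) ! i) = pvert X u (p @ q) i" if "i < length (p @ q)" for i
  proof (cases "i < length p")
    case True
    then show ?thesis using p by (simp add: nth_append pvert_append_left path_from_iff)
  next
    case False
    then obtain k where "i = length p + k" by (metis le_Suc_ex not_less)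
    then show ?thesis using p q that by (simp add: nth_append pvert_append_right path_from_iff)
  qed
  moreover have "pvert X u (p @ q) (length (p @ q)) = w"
    using pvert_append_right[of X u p q "length q"] p q by (simp add: path_from_iff)
  ultimately show ?thesis using p q by (auto simp: path_from_iff)
qed

lemma path_verts_pvert: "k \<le> length p \<Longrightarrow> pvert X u p k \<in> path_verts X u p"
  by (simp add: path_verts_def)

lemma path_verts_start: "u \<in> path_verts X u p"
  using path_verts_pvert[of 0 p X u] by simp

lemma path_verts_end: "path_from X u v p \<Longrightarrow> v \<in> path_verts X u p"
  using path_verts_pvert[of "length p" p X u] by (simp add: path_from_pvert_end)

lemma path_verts_cases: "x \<in> path_verts X u p \<Longrightarrow> (\<And>k. k \<le> length p \<Longrightarrow> x = pvert X u p k \<Longrightarrow> P) \<Longrightarrow> P"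
  by (auto simp: path_verts_def)

lemma finite_path_verts [simp]: "finite (path_verts X u p)"
  by (simp add: path_verts_def)

lemma path_verts_append:
  assumes "path_from X u v p"
  shows "path_verts X u (p @ q) = path_verts X u p \<union> path_verts X v q"
proof -
  have "pvert X u (p @ q) k \<in> path_verts X u p \<union> path_verts X v q" if "k \<le> length (p @ q)" for k
  proof (cases "k \<le> length p")
    case True
    then show ?thesis by (simp add: pvert_append_left path_verts_pvert)
  next
    case False
    then obtain j where "k = length p + j" by (metis le_Suc_ex nat_le_linear)
    then show ?thesis using that assms
      by (simp add: pvert_append_right path_from_pvert_end path_verts_pvert)
  qed
  moreover have "pvert X u p k \<in> path_verts X u (p @ q)" if "k \<le> length p" for k
    using that path_verts_pvert[of k "p @ q" X u] by (simp add: pvert_append_left)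
  moreover have "pvert X v q j \<in> path_verts X u (p @ q)" if "j \<le> length q" for j
    using that path_verts_pvert[of "length p + j" "p @ q" X u] pvert_append_right[of X u p q j] assms
    by (simp add: path_from_pvert_end)
  ultimately show ?thesis
    by (auto elim!: path_verts_cases) fastforce
qed

locale complex2 =
  fixes X :: "('v,'e,'f) cx"
  assumes two_complex: "two_complex X"
begin

lemma dsrc_in_verts: "fst d \<in> edges X \<Longrightarrow> dsrc X d \<in> verts X"
  using two_complex by (auto simp: two_complex_def dsrc_def)

lemma dtgt_in_verts: "fst d \<in> edges X \<Longrightarrow> dtgt X d \<in> verts X"
  using two_complex by (auto simp: two_complex_def dtgt_def)

lemma pvert_in_verts:
  assumes "path_from X u v p" "i \<le> length p"
  shows "pvert X u p i \<in> verts X"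
proof (cases i)
  case 0
  then show ?thesis using assms by (simp add: path_from_iff)
next
  case (Suc j)
  then have "fst (p ! j) \<in> edges X" using assms by (auto simp: path_from_iff)
  then show ?thesis using Suc by (simp add: pvert_Suc dtgt_in_verts)
qed

lemma path_from_drop:
  assumes p: "path_from X u v p" and i: "i \<le> length p"
  shows "path_from X (pvert X u p i) v (drop i p)"
  unfolding path_from_iff
proof (intro conjI allI impI)
  show "pvert X u p i \<in> verts X" using pvert_in_verts[OF p i] .
  show "fst ` set (drop i p) \<subseteq> edges X" using p set_drop_subset[of i p] by (auto simp: path_from_iff)
  show "dsrc X (drop i p ! k) = pvert X (pvert X u p i) (drop i p) k" if "k < length (drop i p)" for k
    using that i path_from_dsrc[OF p, of "i + k"] pvert_drop[of i k p X u] by simp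
  show "pvert X (pvert X u p i) (drop i p) (length (drop i p)) = v"
    using i pvert_drop[of i "length p - i" p X u] path_from_pvert_end[OF p] by simp
qed

lemma pvert_rev_path:
  assumes p: "path_from X u v p" and k: "k \<le> length p"
  shows "pvert X v (rev_path p) k = pvert X u p (length p - k)"
proof (cases k)
  case 0
  then show ?thesis using path_from_pvert_end[OF p] by simp
next
  case (Suc j)
  then have "pvert X v (rev_path p) k = dsrc X (p ! (length p - Suc j))"
    using k by (simp add: pvert_def rev_path_def rev_nth)
  then show ?thesis using path_from_dsrc[OF p] k Suc by simp
qed

lemma path_from_rev_path:
  assumes p: "path_from X u v p"
  shows "path_from X v u (rev_path p)"
  unfolding path_from_iff
proof (intro conjI allI impI)
  show "v \<in> verts X" using pvert_in_verts[OF p, of "length p"] path_from_pvert_end[OF p] by simp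
  show "fst ` set (rev_path p) \<subseteq> edges X" using p by (auto simp: rev_path_def path_from_iff dinv_def)
  show "dsrc X (rev_path p ! k) = pvert X v (rev_path p) k" if "k < length (rev_path p)" for k
  proof -
    have "dsrc X (rev_path p ! k) = pvert X u p (Suc (length p - Suc k))"
      using that by (simp add: rev_path_def rev_nth pvert_Suc)
    then show ?thesis using that pvert_rev_path[OF p, of k] by (simp add: Suc_diff_Suc)
  qed
  show "pvert X v (rev_path p) (length (rev_path p)) = u"
    using pvert_rev_path[OF p, of "length p"] by simp
qed

lemma path_verts_rev_path:
  assumes p: "path_from X u v p"
  shows "path_verts X v (rev_path p) = path_verts X u p"
proof -
  have "pvert X u p k \<in> path_verts X v (rev_path p)" if "k \<le> length p" for k
    using path_verts_pvert[of "length p - k" "rev_path p" X v] pvert_rev_path[OF p, of "length p - k"] that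
    by simp
  then show ?thesis
    using pvert_rev_path[OF p] by (auto simp: path_verts_def)
qed

lemma path_verts_drop:
  "i \<le> length p \<Longrightarrow> path_verts X (pvert X u p i) (drop i p) \<subseteq> path_verts X u p"
  by (auto simp: path_verts_def pvert_drop)

lemma reachable_sym: "reachable X u v \<Longrightarrow> reachable X v u"
  using path_from_rev_path by (auto simp: reachable_def)

lemma reachable_trans: "reachable X u v \<Longrightarrow> reachable X v w \<Longrightarrow> reachable X u w"
  unfolding reachable_def by (meson path_from_append)

lemma reachable_pvert: "path_from X u v p \<Longrightarrow> i \<le> length p \<Longrightarrow> reachable X u (pvert X u p i)"
  unfolding reachable_def by (meson path_from_take)

lemma reachable_path_verts: "path_from X u v p \<Longrightarrow> x \<in> path_verts X u p \<Longrightarrow> reachable X u x"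
  by (erule path_verts_cases) (simp add: reachable_pvert)

lemma vdist_le: "path_from X u v p \<Longrightarrow> vdist X u v \<le> length p"
  unfolding vdist_def by (rule Least_le) blast

lemma geod_exists: "reachable X u v \<Longrightarrow> \<exists>p. geod X u v p"
  unfolding geod_def vdist_def reachable_def by (rule LeastI_ex) blast

lemma vdist_refl: "u \<in> verts X \<Longrightarrow> vdist X u u = 0"
  using vdist_le[of u u "[]"] by (simp add: path_from_def is_path_def)

lemma vdist_sym: "reachable X u v \<Longrightarrow> vdist X u v = vdist X v u"
proof -
  have le: "vdist X v u \<le> vdist X u v" if "reachable X u v" for u v
    using geod_exists[OF that] vdist_le[OF path_from_rev_path] by (fastforce simp: geod_def)
  show "reachable X u v \<Longrightarrow> ?thesis" using le[of u v] le[of v u] reachable_sym by fastforce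
qed

lemma vdist_triangle: "reachable X u v \<Longrightarrow> reachable X v w \<Longrightarrow> vdist X u w \<le> vdist X u v + vdist X v w"
  using geod_exists[of u v] geod_exists[of v w] vdist_le[OF path_from_append]
  by (fastforce simp: geod_def)

lemma vdist_pvert_start: "path_from X u v p \<Longrightarrow> k \<le> length p \<Longrightarrow> vdist X u (pvert X u p k) \<le> k"
  using vdist_le[OF path_from_take] by fastforce

lemma vdist_pvert_end: "path_from X u v p \<Longrightarrow> k \<le> length p \<Longrightarrow> vdist X (pvert X u p k) v \<le> length p - k"
  using vdist_le[OF path_from_drop] by fastforce

lemma gdist_eq_vdist: "reachable X u v \<Longrightarrow> gdist X u v = ereal (real (vdist X u v))"
  unfolding gdist_def
proof (rule Inf_eqI)
  show "ereal (real (vdist X u v)) \<le> i" if "i \<in> {ereal (real (length p)) |p. path_from X u v p}" for i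
    using that vdist_le by auto
  show "y \<le> ereal (real (vdist X u v))"
    if "reachable X u v" "\<And>i. i \<in> {ereal (real (length p)) |p. path_from X u v p} \<Longrightarrow> y \<le> i" for y
    using that geod_exists[of u v] by (force simp: geod_def)
qed

lemma geodesic_iff_geod: "geodesic X u v p \<longleftrightarrow> geod X u v p"
proof -
  have "path_from X u v p \<Longrightarrow> gdist X u v = ereal (real (vdist X u v))"
    using gdist_eq_vdist by (auto simp: reachable_def)
  then show ?thesis by (auto simp: geodesic_def geod_def)
qed

lemma geod_vdist_pvert:
  assumes g: "geod X u v p" and ij: "i \<le> j" "j \<le> length p"
  shows "vdist X (pvert X u p i) (pvert X u p j) = j - i"
proof -
  have p: "path_from X u v p" and len: "length p = vdist X u v" using g by (auto simp: geod_def)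
  let ?x = "pvert X u p i" and ?y = "pvert X u p j"
  have "path_from X ?x ?y (take (j - i) (drop i p))"
    using path_from_take[OF path_from_drop[OF p], of i "j - i"] ij pvert_drop[of i "j - i" p X u] by simp
  then have xy: "vdist X ?x ?y \<le> j - i" and rxy: "reachable X ?x ?y"
    using vdist_le[of ?x ?y] ij by (fastforce simp: reachable_def)+
  have rux: "reachable X u ?x" and ryv: "reachable X ?y v"
    using reachable_pvert[OF p] path_from_drop[OF p, of j] ij by (auto simp: reachable_def)
  have "vdist X u v \<le> vdist X u ?x + vdist X ?x ?y + vdist X ?y v"
    using vdist_triangle[OF rux reachable_trans[OF rxy ryv]] vdist_triangle[OF rxy ryv] by linarith
  then show ?thesis
    using xy len ij vdist_pvert_start[OF p, of i] vdist_pvert_end[OF p, of j] by linarith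
qed

lemma geod_vdist_pvert_abs:
  assumes g: "geod X u v p" and "i \<le> length p" "j \<le> length p"
  shows "real (vdist X (pvert X u p i) (pvert X u p j)) = \<bar>real i - real j\<bar>"
proof (cases "i \<le> j")
  case True
  then show ?thesis using geod_vdist_pvert[OF g True] assms by simp
next
  case False
  have p: "path_from X u v p" using g by (simp add: geod_def)
  have "reachable X (pvert X u p j) (pvert X u p i)"
    using reachable_trans[OF reachable_sym[OF reachable_pvert[OF p]] reachable_pvert[OF p]] assms by blast
  then show ?thesis using geod_vdist_pvert[OF g, of j i] False assms vdist_sym by auto
qed

lemma geod_rev_path: "geod X u v p \<Longrightarrow> geod X v u (rev_path p)"
  by (metis geod_def path_from_rev_path reachable_def vdist_sym length_rev_path)

lemma geod_take:
  assumes g: "geod X u v p" and i: "i \<le> length p"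
  shows "geod X u (pvert X u p i) (take i p)"
proof -
  have "path_from X u v p" using g by (simp add: geod_def)
  then show ?thesis using path_from_take i geod_vdist_pvert[OF g, of 0 i] by (simp add: geod_def)
qed

lemma geod_drop:
  assumes g: "geod X u v p" and i: "i \<le> length p"
  shows "geod X (pvert X u p i) v (drop i p)"
proof -
  have p: "path_from X u v p" using g by (simp add: geod_def)
  then show ?thesis
    using path_from_drop[OF p i] geod_vdist_pvert[OF g i] path_from_pvert_end[OF p] by (simp add: geod_def)
qed


lemma path_segment:
  assumes p: "path_from X a b c" and "i \<le> length c" "j \<le> length c"
  shows "\<exists>w. path_from X (pvert X a c i) (pvert X a c j) w \<and> length w = (if i \<le> j then j - i else i - j)
            \<and> path_verts X (pvert X a c i) w \<subseteq> path_verts X a c"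
proof -
  have forward: "\<exists>w. path_from X (pvert X a c i) (pvert X a c j) w \<and> length w = j - i
            \<and> path_verts X (pvert X a c i) w \<subseteq> path_verts X a c" if ij: "i \<le> j" "j \<le> length c" for i j
  proof -
    define w where "w = take (j - i) (drop i c)"
    have "path_from X (pvert X a c i) b (drop i c)" using path_from_drop[OF p] ij by simp
    from path_from_take[OF this, of "j - i"]
    have "path_from X (pvert X a c i) (pvert X a c j) w"
      using ij pvert_drop[of i "j - i" c X a] by (simp add: w_def)
    moreover have "path_verts X (pvert X a c i) w \<subseteq> path_verts X a c"
      using path_verts_drop[of i c a] ij
      by (auto simp: w_def path_verts_def pvert_take)
    ultimately show ?thesis using ij by (auto simp: w_def)
  qed
  show ?thesis
  proof (cases "i \<le> j")
    case True
    then show ?thesis using forward[OF True] assms by simp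
  next
    case False
    then obtain w where w: "path_from X (pvert X a c j) (pvert X a c i) w" "length w = i - j"
      "path_verts X (pvert X a c j) w \<subseteq> path_verts X a c"
      using forward[of j i] assms by auto
    then show ?thesis
      using path_from_rev_path[OF w(1)] path_verts_rev_path[OF w(1)] False
      by (intro exI[of _ "rev_path w"]) auto
  qed
qed

lemma geod_segment:
  assumes g: "geod X a b c" and x: "x \<in> path_verts X a c" and y: "y \<in> path_verts X a c"
  shows "\<exists>w. path_from X y x w \<and> length w = vdist X y x \<and> path_verts X y w \<subseteq> path_verts X a c"
proof -
  obtain i j where i: "i \<le> length c" "y = pvert X a c i" and j: "j \<le> length c" "x = pvert X a c j"
    using x y by (auto elim!: path_verts_cases)
  moreover have "real (vdist X y x) = \<bar>real i - real j\<bar>"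
    using geod_vdist_pvert_abs[OF g i(1) j(1)] i j by simp
  ultimately show ?thesis
    using path_segment[of a b c i j] g by (auto simp: geod_def split: if_splits)
qed

lemma reachable_dart: "fst d \<in> edges X \<Longrightarrow> reachable X (dsrc X d) (dtgt X d)"
  and vdist_dart: "fst d \<in> edges X \<Longrightarrow> vdist X (dsrc X d) (dtgt X d) \<le> 1"
proof -
  assume "fst d \<in> edges X"
  then have "path_from X (dsrc X d) (dtgt X d) [d]"
    by (simp add: path_from_def is_path_def dsrc_in_verts)
  then show "reachable X (dsrc X d) (dtgt X d)" "vdist X (dsrc X d) (dtgt X d) \<le> 1"
    using vdist_le by (fastforce simp: reachable_def)+
qed

lemma reachable_common: "reachable X x z \<Longrightarrow> reachable X y z \<Longrightarrow> reachable X x y"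
  using reachable_sym reachable_trans by blast

lemma vdist_path_verts_start: "path_from X u v p \<Longrightarrow> x \<in> path_verts X u p \<Longrightarrow> vdist X u x \<le> length p"
  by (fastforce elim: path_verts_cases dest: vdist_pvert_start)

lemma vdist_path_verts_end: "path_from X u v p \<Longrightarrow> x \<in> path_verts X u p \<Longrightarrow> vdist X x v \<le> length p"
  by (fastforce elim: path_verts_cases dest: vdist_pvert_end)

end

section \<open>A discrete line integral\<close>

definition lipschitz1 :: "('v,'e,'f) cx \<Rightarrow> ('v \<Rightarrow> real) \<Rightarrow> bool" where
  "lipschitz1 X f \<longleftrightarrow> (\<forall>e\<in>edges X. \<bar>f (fst (ends X e)) - f (snd (ends X e))\<bar> \<le> 1)"

definition line_integral :: "('v,'e,'f) cx \<Rightarrow> ('v \<Rightarrow> real) \<Rightarrow> ('v \<Rightarrow> real) \<Rightarrow> ('e \<times> bool) list \<Rightarrow> real" where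
  "line_integral X f g p = (\<Sum>d\<leftarrow>p. (g (dsrc X d) + g (dtgt X d)) / 2 * (f (dtgt X d) - f (dsrc X d)))"

lemma line_integral_Nil [simp]: "line_integral X f g [] = 0"
  by (simp add: line_integral_def)

lemma line_integral_append: "line_integral X f g (p @ q) = line_integral X f g p + line_integral X f g q"
  by (simp add: line_integral_def)

lemma line_integral_single:
  "line_integral X f g [d] = (g (dsrc X d) + g (dtgt X d)) / 2 * (f (dtgt X d) - f (dsrc X d))"
  by (simp add: line_integral_def)

lemma line_integral_backtrack: "line_integral X f g (u @ d # dinv d # w) = line_integral X f g (u @ w)"
  by (simp add: line_integral_def field_simps)

lemma line_integral_rev_path: "line_integral X f g (rev_path p) = - line_integral X f g p"
  by (induction p) (simp_all add: rev_path_def line_integral_def field_simps)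

lemma line_integral_rotate: "line_integral X f g (rotate k p) = line_integral X f g p"
proof -
  let ?m = "k mod length p"
  have "line_integral X f g (rotate k p) = line_integral X f g (drop ?m p) + line_integral X f g (take ?m p)"
    by (simp add: rotate_drop_take line_integral_append)
  also have "\<dots> = line_integral X f g (take ?m p @ drop ?m p)"
    by (simp only: line_integral_append add.commute)
  finally show ?thesis by simp
qed

lemma line_integral_const:
  assumes "path_from X y x w" "\<forall>k\<le>length w. f (pvert X y w k) = c"
  shows "line_integral X f g w = 0"
proof -
  have "(g (dsrc X d) + g (dtgt X d)) / 2 * (f (dtgt X d) - f (dsrc X d)) = 0" if "d \<in> set w" for d
  proof -
    obtain k where "k < length w" "d = w ! k" using \<open>d \<in> set w\<close> by (auto simp: in_set_conv_nth)
    then show ?thesis using assms path_from_dsrc[of X y x w k] pvert_Suc[of X y w k, symmetric] by simp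
  qed
  then have m: "map (\<lambda>d. (g (dsrc X d) + g (dtgt X d)) / 2 * (f (dtgt X d) - f (dsrc X d))) w
      = map (\<lambda>_. 0) w"
    by (intro map_cong) auto
  show ?thesis unfolding line_integral_def m by simp
qed

lemma lipschitz1_dart: "lipschitz1 X f \<Longrightarrow> fst d \<in> edges X \<Longrightarrow> \<bar>f (dtgt X d) - f (dsrc X d)\<bar> \<le> 1"
  unfolding lipschitz1_def dtgt_def dsrc_def by (cases "snd d") (auto simp: abs_minus_commute)

lemma is_path_snoc:
  "is_path X (p @ [d]) \<longleftrightarrow> is_path X p \<and> fst d \<in> edges X \<and> (p \<noteq> [] \<longrightarrow> dtgt X (last p) = dsrc X d)"
  unfolding is_path_def
  by (auto simp: nth_append last_conv_nth less_Suc_eq) (metis One_nat_def diff_Suc_1)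

lemma lipschitz1_path:
  assumes g: "lipschitz1 X g"
  shows "is_path X p \<Longrightarrow> p \<noteq> [] \<Longrightarrow> \<bar>g (dtgt X (last p)) - g (dsrc X (hd p))\<bar> \<le> real (length p)"
proof (induction p rule: rev_induct)
  case (snoc d p)
  then have d: "\<bar>g (dtgt X d) - g (dsrc X d)\<bar> \<le> 1" using lipschitz1_dart[OF g] by (simp add: is_path_snoc)
  show ?case
  proof (cases "p = []")
    case True
    then show ?thesis using d by simp
  next
    case False
    then show ?thesis using snoc d by (simp add: is_path_snoc)
  qed
qed simp

text \<open>Along a path from \<open>s\<close> to \<open>e\<close> the integral differs from \<open>g(s) (f(e) - f(s))\<close> by at most
  \<open>length\<^sup>2 / 2\<close>: the \<open>k\<close>-th edge contributes an error of at most \<open>k + 1/2\<close>.\<close>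

lemma path_line_integral_bound:
  assumes f: "lipschitz1 X f" and g: "lipschitz1 X g"
  shows "is_path X p \<Longrightarrow> p \<noteq> [] \<Longrightarrow>
    \<bar>line_integral X f g p - g (dsrc X (hd p)) * (f (dtgt X (last p)) - f (dsrc X (hd p)))\<bar>
      \<le> (real (length p))\<^sup>2 / 2"
proof (induction p rule: rev_induct)
  case (snoc d p)
  have dp: "fst d \<in> edges X" "is_path X p" "p \<noteq> [] \<longrightarrow> dtgt X (last p) = dsrc X d"
    using snoc.prems(1) by (simp_all add: is_path_snoc)
  define s where "s = dsrc X (hd (p @ [d]))"
  have df: "\<bar>f (dtgt X d) - f (dsrc X d)\<bar> \<le> 1" using lipschitz1_dart[OF f dp(1)] .
  have "\<bar>g (dsrc X d) - g s\<bar> \<le> real (length p)"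
    using lipschitz1_path[OF g dp(2)] dp(3) by (cases "p = []") (auto simp: s_def)
  moreover have "\<bar>g (dtgt X d) - g (dsrc X d)\<bar> \<le> 1" using lipschitz1_dart[OF g dp(1)] .
  ultimately have "\<bar>(g (dsrc X d) + g (dtgt X d)) / 2 - g s\<bar> \<le> real (length p) + 1/2"
    by (simp add: abs_le_iff field_simps)
  then have "\<bar>(g (dsrc X d) + g (dtgt X d)) / 2 - g s\<bar> * \<bar>f (dtgt X d) - f (dsrc X d)\<bar>
      \<le> (real (length p) + 1/2) * 1"
    using df by (intro mult_mono) auto
  then have err: "\<bar>((g (dsrc X d) + g (dtgt X d)) / 2 - g s) * (f (dtgt X d) - f (dsrc X d))\<bar>
      \<le> real (length p) + 1/2"
    by (simp add: abs_mult)
  have IH: "\<bar>line_integral X f g p - g s * (f (dsrc X d) - f s)\<bar> \<le> (real (length p))\<^sup>2 / 2"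
    using snoc.IH dp by (cases "p = []") (auto simp: s_def)
  have "\<bar>line_integral X f g (p @ [d]) - g s * (f (dtgt X d) - f s)\<bar>
      \<le> \<bar>line_integral X f g p - g s * (f (dsrc X d) - f s)\<bar>
        + \<bar>((g (dsrc X d) + g (dtgt X d)) / 2 - g s) * (f (dtgt X d) - f (dsrc X d))\<bar>"
    by (rule order_trans[OF _ abs_triangle_ineq]) (simp add: line_integral_append line_integral_single algebra_simps)
  also have "\<dots> \<le> (real (length (p @ [d])))\<^sup>2 / 2"
    using IH err by (simp add: power2_eq_square algebra_simps)
  finally show ?case by (simp add: s_def)
qed simp

lemma loop_line_integral_bound:
  assumes "lipschitz1 X f" "lipschitz1 X g" "is_loop X c"
  shows "\<bar>line_integral X f g c\<bar> \<le> (real (length c))\<^sup>2 / 2"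
  using path_line_integral_bound[OF assms(1,2), of c] assms(3) by (cases "c = []") (auto simp: is_loop_def)

lemma fills_line_integral_bound:
  assumes "\<And>c. c \<in> face_loops X \<Longrightarrow> \<bar>line_integral X f g c\<bar> \<le> B"
  shows "fills X k p \<Longrightarrow> \<bar>line_integral X f g p\<bar> \<le> real k * B"
proof (induction rule: fills.induct)
  case (fills_face c u w k)
  have "\<bar>line_integral X f g (u @ w)\<bar> \<le> \<bar>line_integral X f g (u @ c @ w)\<bar> + \<bar>line_integral X f g c\<bar>"
    by (simp add: line_integral_append)
  then show ?case using fills_face assms[OF fills_face(1)] by (simp add: algebra_simps)
qed (simp_all add: line_integral_backtrack)

lemma area_ge_line_integral:
  assumes X: "two_complex X" and "0 < N" and N: "\<forall>F\<in>faces X. length (bdry X F) \<le> N"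
    and f: "lipschitz1 X f" and g: "lipschitz1 X g"
  shows "ereal (2 * \<bar>line_integral X f g p\<bar> / (real N)\<^sup>2) \<le> area X p"
  unfolding area_def
proof (rule Inf_greatest)
  have face: "\<bar>line_integral X f g c\<bar> \<le> (real N)\<^sup>2 / 2" if c: "c \<in> face_loops X" for c
  proof -
    obtain k F where F: "F \<in> faces X"
      and "c = rotate k (bdry X F) \<or> c = rotate k (rev_path (bdry X F))"
      using c unfolding face_loops_def rev_path_def by blast
    then have "\<bar>line_integral X f g c\<bar> = \<bar>line_integral X f g (bdry X F)\<bar>"
      by (auto simp: line_integral_rotate line_integral_rev_path)
    also have "\<dots> \<le> (real (length (bdry X F)))\<^sup>2 / 2"
      using loop_line_integral_bound[OF f g] X F by (auto simp: two_complex_def)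
    also have "\<dots> \<le> (real N)\<^sup>2 / 2" using N F by (simp add: power_mono)
    finally show ?thesis .
  qed
  fix x assume "x \<in> {ereal (real k) |k. fills X k p}"
  then obtain k where x: "x = ereal (real k)" and k: "fills X k p" by blast
  have "\<bar>line_integral X f g p\<bar> \<le> real k * ((real N)\<^sup>2 / 2)"
    using fills_line_integral_bound[OF face k] .
  then show "ereal (2 * \<bar>line_integral X f g p\<bar> / (real N)\<^sup>2) \<le> x"
    using x \<open>0 < N\<close> by (simp add: pos_divide_le_eq)
qed

text \<open>The conclusion of the isoperimetric hypothesis that the argument actually uses, with
  \<open>M = \<kappa> N\<^sup>2\<close>: below the area threshold \<open>18 \<kappa>\<^sup>2 N\<^sup>2\<close> the integral is at most \<open>9 M\<^sup>2\<close>.\<close>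

locale linear_isoperimetry = complex2 X for X :: "('v,'e,'f) cx" +
  fixes M :: real
  assumes M_ge_1: "1 \<le> M"
    and loop_integral_bound: "\<And>f g \<gamma>. lipschitz1 X f \<Longrightarrow> lipschitz1 X g \<Longrightarrow> is_loop X \<gamma> \<Longrightarrow>
        \<bar>line_integral X f g \<gamma>\<bar> \<le> max (9 * M\<^sup>2) (M * real (length \<gamma>) / 2)"

lemma linear_isoperimetry_of_area_bound:
  fixes X :: "('v,'e,'f) cx" and N :: nat and \<kappa> :: real
  assumes X: "two_complex X" and N0: "0 < N" and N: "\<forall>F\<in>faces X. length (bdry X F) \<le> N"
    and \<kappa>: "\<kappa> > 1 / real N"
    and iso: "\<forall>\<gamma>. is_loop X \<gamma> \<longrightarrow> area X \<gamma> \<ge> ereal (18 * \<kappa>\<^sup>2 * (real N)\<^sup>2)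
            \<longrightarrow> area X \<gamma> \<le> ereal (\<kappa> * real (length \<gamma>))"
  shows "linear_isoperimetry X (\<kappa> * (real N)\<^sup>2)"
proof unfold_locales
  show "two_complex X" by (fact X)
  have "1 < \<kappa> * real N" using \<kappa> N0 by (simp add: field_simps)
  moreover have "\<kappa> * real N * 1 \<le> \<kappa> * real N * real N"
    using calculation N0 by (intro mult_left_mono) auto
  ultimately show "1 \<le> \<kappa> * (real N)\<^sup>2" by (simp add: power2_eq_square mult.assoc)
next
  fix f g \<gamma> assume f: "lipschitz1 X f" and g: "lipschitz1 X g" and \<gamma>: "is_loop X \<gamma>"
  let ?I = "\<bar>line_integral X f g \<gamma>\<bar>" and ?M = "\<kappa> * (real N)\<^sup>2"
  have A: "ereal (2 * ?I / (real N)\<^sup>2) \<le> area X \<gamma>" by (rule area_ge_line_integral[OF X N0 N f g])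
  have N2: "(real N)\<^sup>2 > 0" using N0 by simp
  show "?I \<le> max (9 * ?M\<^sup>2) (?M * real (length \<gamma>) / 2)"
  proof (cases "2 * ?I / (real N)\<^sup>2 \<ge> 18 * \<kappa>\<^sup>2 * (real N)\<^sup>2")
    case True
    then have "ereal (18 * \<kappa>\<^sup>2 * (real N)\<^sup>2) \<le> ereal (2 * ?I / (real N)\<^sup>2)" by simp
    then have "area X \<gamma> \<ge> ereal (18 * \<kappa>\<^sup>2 * (real N)\<^sup>2)" using A by (rule order_trans)
    then have "area X \<gamma> \<le> ereal (\<kappa> * real (length \<gamma>))" using iso \<gamma> by blast
    with A have "ereal (2 * ?I / (real N)\<^sup>2) \<le> ereal (\<kappa> * real (length \<gamma>))" by (rule order_trans)
    then have "2 * ?I / (real N)\<^sup>2 \<le> \<kappa> * real (length \<gamma>)" by simp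
    then have "?I \<le> ?M * real (length \<gamma>) / 2" using N2 by (simp add: pos_divide_le_eq algebra_simps)
    then show ?thesis by simp
  next
    case False
    then have "2 * ?I / (real N)\<^sup>2 < 18 * \<kappa>\<^sup>2 * (real N)\<^sup>2" by simp
    then have "2 * ?I < 18 * \<kappa>\<^sup>2 * (real N)\<^sup>2 * (real N)\<^sup>2" using N2 by (simp only: pos_divide_less_eq)
    then have "?I \<le> 9 * ?M\<^sup>2" by (simp add: power2_eq_square ac_simps)
    then show ?thesis by simp
  qed
qed

section \<open>Detours around a ball\<close>

definition trunc_dist :: "('v,'e,'f) cx \<Rightarrow> 'v \<Rightarrow> nat \<Rightarrow> 'v \<Rightarrow> real" where
  "trunc_dist X z R v = (if reachable X v z then min (real (vdist X v z)) (real R) else real R)"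

lemma (in complex2) lipschitz1_trunc_dist: "lipschitz1 X (trunc_dist X z R)"
  unfolding lipschitz1_def
proof
  fix e assume e: "e \<in> edges X"
  let ?v = "fst (ends X e)" and ?w = "snd (ends X e)"
  have "dsrc X (e, True) = ?v" "dtgt X (e, True) = ?w" by (simp_all add: dsrc_def dtgt_def)
  then have vw: "reachable X ?v ?w" "vdist X ?v ?w \<le> 1"
    using reachable_dart[of "(e, True)"] vdist_dart[of "(e, True)"] e by auto
  show "\<bar>trunc_dist X z R ?v - trunc_dist X z R ?w\<bar> \<le> 1"
  proof (cases "reachable X ?v z")
    case True
    then have wz: "reachable X ?w z" using reachable_trans[OF reachable_sym[OF vw(1)]] by blast
    have "vdist X ?v z \<le> vdist X ?v ?w + vdist X ?w z" using vdist_triangle[OF vw(1) wz] .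
    moreover have "vdist X ?w z \<le> vdist X ?w ?v + vdist X ?v z"
      using vdist_triangle[OF reachable_sym[OF vw(1)] True] .
    ultimately show ?thesis
      using True wz vw vdist_sym[OF vw(1)] by (simp add: trunc_dist_def abs_le_iff min_def)
  next
    case False
    then have "\<not> reachable X ?w z" using reachable_trans[OF vw(1)] by blast
    then show ?thesis using False by (simp add: trunc_dist_def)
  qed
qed

text \<open>The profile of \<open>trunc_dist z R\<close> along a geodesic through \<open>z\<close> at time \<open>t0\<close>.\<close>

definition notch :: "nat \<Rightarrow> nat \<Rightarrow> nat \<Rightarrow> real" where
  "notch t0 R t = min \<bar>real t - real t0\<bar> (real R)"

definition notch_moment :: "nat \<Rightarrow> nat \<Rightarrow> nat \<Rightarrow> real" where
  "notch_moment t0 R n = (\<Sum>t<n. (real t + 1/2) * (notch t0 R (Suc t) - notch t0 R t))"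

lemma notch_moment_eq:
  "notch_moment (a + R) R n =
     (if n \<le> a then 0
      else if n \<le> a + R then - ((real n)\<^sup>2 - (real a)\<^sup>2) / 2
      else if n \<le> a + 2 * R then ((real n)\<^sup>2 - 2 * (real a + real R)\<^sup>2 + (real a)\<^sup>2) / 2
      else (real R)\<^sup>2)"
proof (induction n)
  case (Suc n)
  let ?step = "(real n + 1/2) * (notch (a + R) R (Suc n) - notch (a + R) R n)"
  have moment: "notch_moment (a + R) R (Suc n) = notch_moment (a + R) R n + ?step"
    by (simp add: notch_moment_def)
  consider "Suc n \<le> a" | "a \<le> n" "Suc n \<le> a + R" | "a + R \<le> n" "Suc n \<le> a + 2 * R" | "a + 2 * R \<le> n"
    by linarith
  then show ?case
  proof cases
    case 1
    then have "?step = 0" by (simp add: notch_def)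
    then show ?thesis using Suc.IH 1 moment by simp
  next
    case 2
    then have "?step = - (real n + 1/2)" by (simp add: notch_def)
    moreover have "notch_moment (a + R) R n = - ((real n)\<^sup>2 - (real a)\<^sup>2) / 2"
      using Suc.IH 2 by (cases "n = a") auto
    ultimately show ?thesis using 2 moment by (simp add: power2_eq_square field_simps)
  next
    case 3
    then have "?step = real n + 1/2" by (simp add: notch_def)
    moreover have "notch_moment (a + R) R n = ((real n)\<^sup>2 - 2 * (real a + real R)\<^sup>2 + (real a)\<^sup>2) / 2"
      using Suc.IH 3 by (cases "n = a + R") (auto simp: power2_eq_square field_simps)
    ultimately show ?thesis using 3 moment by (simp add: power2_eq_square field_simps)
  next
    case 4
    then have "?step = 0" by (simp add: notch_def)
    moreover have "notch_moment (a + R) R n = (real R)\<^sup>2"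
      using Suc.IH 4 by (cases "n = a + 2 * R") (auto simp: power2_eq_square field_simps)
    ultimately show ?thesis using 4 moment by simp
  qed
qed (simp add: notch_moment_def)

lemma notch_window_sum:
  assumes "i1 + R \<le> t0" "t0 + R \<le> i2"
  shows "(\<Sum>t\<in>{i1..<i2}. (real t + 1/2) * (notch t0 R (Suc t) - notch t0 R t)) = (real R)\<^sup>2"
proof -
  define h where "h t = (real t + 1/2) * (notch t0 R (Suc t) - notch t0 R t)" for t
  obtain a where t0: "t0 = a + R" using assms(1) by (metis add.commute le_add2 le_Suc_ex le_trans)
  have "notch_moment t0 R i2 = (real R)\<^sup>2"
    using notch_moment_eq[of a R i2] t0 assms
    by (cases "i2 = a + 2 * R") (auto simp: power2_eq_square field_simps)
  moreover have "notch_moment t0 R i1 = 0" using notch_moment_eq[of a R i1] t0 assms by simp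
  moreover have "sum h {i1..<i2} = sum h {..<i2} - sum h {..<i1}"
    using sum_diff_nat_ivl[of 0 i1 i2 h] assms by (simp add: atLeast0LessThan)
  ultimately show ?thesis by (simp add: notch_moment_def h_def)
qed

definition avoids :: "('v,'e,'f) cx \<Rightarrow> 'v \<Rightarrow> nat \<Rightarrow> 'v \<Rightarrow> ('e \<times> bool) list \<Rightarrow> bool" where
  "avoids X z r y w \<longleftrightarrow> (\<forall>x\<in>path_verts X y w. reachable X x z \<and> r \<le> vdist X x z)"

lemma avoids_append:
  "path_from X y m w1 \<Longrightarrow> avoids X z r y w1 \<Longrightarrow> avoids X z r m w2 \<Longrightarrow> avoids X z r y (w1 @ w2)"
  by (auto simp: avoids_def path_verts_append)

lemma avoids_subset:
  "path_verts X y w \<subseteq> S \<Longrightarrow> \<forall>s\<in>S. reachable X s z \<and> r \<le> vdist X s z \<Longrightarrow> avoids X z r y w"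
  by (auto simp: avoids_def)

context complex2
begin

lemma avoids_rev_path: "path_from X y x p \<Longrightarrow> avoids X z r y p \<Longrightarrow> avoids X z r x (rev_path p)"
  by (simp add: avoids_def path_verts_rev_path)

lemma avoids_far_start:
  assumes p: "path_from X y x p" and yz: "reachable X y z" and far: "length p + r \<le> vdist X y z"
  shows "avoids X z r y p"
  unfolding avoids_def
proof (intro ballI conjI)
  fix q assume "q \<in> path_verts X y p"
  then obtain k where k: "k \<le> length p" and q: "q = pvert X y p k" by (rule path_verts_cases)
  have yq: "reachable X y q" using reachable_pvert[OF p k] q by simp
  show qz: "reachable X q z" using reachable_trans[OF reachable_sym[OF yq] yz] .
  have "vdist X y z \<le> vdist X y q + vdist X q z" using vdist_triangle[OF yq qz] .
  moreover have "vdist X y q \<le> k" using vdist_pvert_start[OF p k] q by simp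
  ultimately show "r \<le> vdist X q z" using far k by linarith
qed

lemma avoids_far_end:
  assumes p: "path_from X y x p" and xz: "reachable X x z" and far: "length p + r \<le> vdist X x z"
  shows "avoids X z r y p"
proof -
  have "avoids X z r x (rev_path p)"
    using avoids_far_start[OF path_from_rev_path[OF p] xz] far by simp
  then show ?thesis
    using avoids_rev_path[OF path_from_rev_path[OF p]] by simp
qed

end

context linear_isoperimetry
begin

text \<open>Close the stretch of \<open>\<alpha>\<close> between \<open>i1\<close> and \<open>i2\<close> by a detour \<open>\<omega>\<close> avoiding the \<open>R\<close>-ball
  around \<open>z = \<alpha>(t0)\<close>. With \<open>f = trunc_dist z R\<close> and \<open>g\<close> the distance from the start of \<open>\<alpha>\<close>,
  \<open>f\<close> is constant on \<open>\<omega>\<close>, and the integral along \<open>\<alpha>\<close> equals \<open>R\<^sup>2\<close>.\<close>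

lemma detour_bound:
  assumes g: "geod X u v \<alpha>" and t0: "t0 \<le> length \<alpha>"
    and win: "i1 + R \<le> t0" "t0 + R \<le> i2" "i2 \<le> length \<alpha>"
    and \<omega>: "path_from X (pvert X u \<alpha> i2) (pvert X u \<alpha> i1) \<omega>"
    and av: "avoids X (pvert X u \<alpha> t0) R (pvert X u \<alpha> i2) \<omega>"
  shows "(real R)\<^sup>2 \<le> max (9 * M\<^sup>2) (M * real (i2 - i1 + length \<omega>) / 2)"
proof -
  have p: "path_from X u v \<alpha>" using g by (simp add: geod_def)
  let ?z = "pvert X u \<alpha> t0" and ?f = "trunc_dist X (pvert X u \<alpha> t0) R" and ?g = "trunc_dist X u (length \<alpha>)"
  define \<sigma> where "\<sigma> = take (i2 - i1) (drop i1 \<alpha>)"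
  have len\<sigma>: "length \<sigma> = i2 - i1" using win by (simp add: \<sigma>_def)
  have pvert\<sigma>: "pvert X (pvert X u \<alpha> i1) \<sigma> k = pvert X u \<alpha> (i1 + k)" if "k \<le> i2 - i1" for k
    using that win pvert_take[of k "i2 - i1" "drop i1 \<alpha>" X "pvert X u \<alpha> i1"] pvert_drop[of i1 k \<alpha> X u]
    by (simp add: \<sigma>_def)
  have "path_from X (pvert X u \<alpha> i1) v (drop i1 \<alpha>)" using path_from_drop[OF p] win by simp
  from path_from_take[OF this, of "i2 - i1"]
  have \<sigma>: "path_from X (pvert X u \<alpha> i1) (pvert X u \<alpha> i2) \<sigma>"
    using win pvert_drop[of i1 "i2 - i1" \<alpha> X u] by (simp add: \<sigma>_def)
  have f\<alpha>: "?f (pvert X u \<alpha> t) = notch t0 R t" if "t \<le> length \<alpha>" for t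
    using geod_vdist_pvert_abs[OF g that t0] reachable_pvert[OF p] that t0
      reachable_trans[OF reachable_sym[OF reachable_pvert[OF p that]] reachable_pvert[OF p t0]]
    by (simp add: trunc_dist_def notch_def)
  have g\<alpha>: "?g (pvert X u \<alpha> t) = real t" if "t \<le> length \<alpha>" for t
    using geod_vdist_pvert_abs[OF g that, of 0] reachable_sym[OF reachable_pvert[OF p that]] that
    by (simp add: trunc_dist_def)
  have "line_integral X ?f ?g \<sigma>
      = (\<Sum>k<i2 - i1. (?g (dsrc X (\<sigma> ! k)) + ?g (dtgt X (\<sigma> ! k))) / 2
                       * (?f (dtgt X (\<sigma> ! k)) - ?f (dsrc X (\<sigma> ! k))))"
    by (simp add: line_integral_def sum_list_sum_nth atLeast0LessThan len\<sigma>)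
  also have "\<dots> = (\<Sum>k<i2 - i1. (real (k + i1) + 1/2) * (notch t0 R (Suc (k + i1)) - notch t0 R (k + i1)))"
  proof (rule sum.cong[OF refl])
    fix k assume "k \<in> {..<i2 - i1}"
    then have k: "k < i2 - i1" "i1 + k \<le> length \<alpha>" "Suc (i1 + k) \<le> length \<alpha>" using win by auto
    have "dsrc X (\<sigma> ! k) = pvert X u \<alpha> (i1 + k)" "dtgt X (\<sigma> ! k) = pvert X u \<alpha> (Suc (i1 + k))"
      using path_from_dsrc[OF \<sigma>, of k] pvert_Suc[of X "pvert X u \<alpha> i1" \<sigma> k, symmetric] k len\<sigma> pvert\<sigma>[of k] pvert\<sigma>[of "Suc k"] by simp_all
    then show "(?g (dsrc X (\<sigma> ! k)) + ?g (dtgt X (\<sigma> ! k))) / 2 * (?f (dtgt X (\<sigma> ! k)) - ?f (dsrc X (\<sigma> ! k)))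
        = (real (k + i1) + 1/2) * (notch t0 R (Suc (k + i1)) - notch t0 R (k + i1))"
      using f\<alpha> g\<alpha> k by (simp add: field_simps add.commute)
  qed
  also have "\<dots> = (\<Sum>t\<in>{i1..<i2}. (real t + 1/2) * (notch t0 R (Suc t) - notch t0 R t))"
    using sum.shift_bounds_nat_ivl[of "\<lambda>t. (real t + 1/2) * (notch t0 R (Suc t) - notch t0 R t)" 0 i1 "i2 - i1"]
      win by (simp add: atLeast0LessThan)
  also have "\<dots> = (real R)\<^sup>2" using notch_window_sum[OF win(1,2)] .
  finally have I\<sigma>: "line_integral X ?f ?g \<sigma> = (real R)\<^sup>2" .
  have I\<omega>: "line_integral X ?f ?g \<omega> = 0"
    using av by (intro line_integral_const[OF \<omega>, of _ "real R"]) (auto simp: avoids_def trunc_dist_def path_verts_pvert)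
  have "is_loop X (\<sigma> @ \<omega>)"
    using path_from_append[OF \<sigma> \<omega>] by (auto simp: path_from_def is_loop_def)
  from loop_integral_bound[OF lipschitz1_trunc_dist[of ?z R] lipschitz1_trunc_dist[of u "length \<alpha>"] this]
  show ?thesis using I\<sigma> I\<omega> len\<sigma> by (simp add: line_integral_append)
qed

end

definition set_dist :: "('v,'e,'f) cx \<Rightarrow> 'v set \<Rightarrow> 'v \<Rightarrow> nat" where
  "set_dist X S q = Min ((\<lambda>s. vdist X q s) ` S)"

lemma set_dist_le: "finite S \<Longrightarrow> s \<in> S \<Longrightarrow> set_dist X S q \<le> vdist X q s"
  unfolding set_dist_def by (rule Min_le) auto

lemma set_dist_attained: "finite S \<Longrightarrow> S \<noteq> {} \<Longrightarrow> \<exists>s\<in>S. vdist X q s = set_dist X S q"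
  unfolding set_dist_def by (metis (mono_tags, lifting) Min_in finite_imageI image_iff image_is_empty)

context complex2
begin

lemma set_dist_eq_0: "finite S \<Longrightarrow> q \<in> S \<Longrightarrow> q \<in> verts X \<Longrightarrow> set_dist X S q = 0"
  using set_dist_le[of S q X q] vdist_refl by simp

lemma nearest_connector:
  assumes S: "finite S" "S \<noteq> {}" "\<forall>s\<in>S. reachable X q s" and qz: "reachable X q z"
    and near: "set_dist X S q \<le> r" and far: "set_dist X S q + r \<le> vdist X q z" "vdist X q z \<le> 2 * r"
  shows "\<exists>y\<in>S. \<exists>c. path_from X q y c \<and> length c \<le> r \<and> vdist X y z \<le> 3 * r \<and> avoids X z r q c"
proof -
  obtain y where y: "y \<in> S" "vdist X q y = set_dist X S q" using set_dist_attained[OF S(1,2)] by blast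
  have qy: "reachable X q y" using S(3) y(1) by blast
  obtain c where c: "path_from X q y c" "length c = vdist X q y" using geod_exists[OF qy] by (auto simp: geod_def)
  have "vdist X y z \<le> vdist X y q + vdist X q z" using vdist_triangle[OF reachable_sym[OF qy] qz] .
  then have "vdist X y z \<le> 3 * r" using y near far vdist_sym[OF qy] by simp
  moreover have "avoids X z r q c" using avoids_far_start[OF c(1) qz] far c(2) y(2) by simp
  moreover have "length c \<le> r" using c(2) y(2) near by simp
  ultimately show ?thesis using y(1) c(1) by blast
qed

end

context linear_isoperimetry
begin

lemma window_bound:
  assumes g: "geod X u v \<alpha>" and t0: "t0 \<le> length \<alpha>" and z: "z = pvert X u \<alpha> t0"
    and win: "i1 + r \<le> t0" "t0 + r \<le> i2" "i2 \<le> length \<alpha>" "i2 - i1 \<le> 4 * r"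
    and c1: "path_from X (pvert X u \<alpha> i2) y c1" "length c1 \<le> r" "avoids X z r (pvert X u \<alpha> i2) c1"
    and c2: "path_from X (pvert X u \<alpha> i1) x c2" "length c2 \<le> r" "avoids X z r (pvert X u \<alpha> i1) c2"
    and \<omega>: "path_from X y x \<omega>" "real (length \<omega>) \<le> L" "avoids X z r y \<omega>"
  shows "(real r)\<^sup>2 \<le> max (9 * M\<^sup>2) (M * (6 * real r + L) / 2)"
proof -
  define W where "W = c1 @ \<omega> @ rev_path c2"
  have "path_from X (pvert X u \<alpha> i2) (pvert X u \<alpha> i1) W"
    unfolding W_def using path_from_append[OF c1(1) path_from_append[OF \<omega>(1) path_from_rev_path[OF c2(1)]]] .
  moreover have "avoids X z r (pvert X u \<alpha> i2) W"
    unfolding W_def using avoids_append[OF c1(1,3) avoids_append[OF \<omega>(1,3) avoids_rev_path[OF c2(1,3)]]] .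
  ultimately have "(real r)\<^sup>2 \<le> max (9 * M\<^sup>2) (M * real (i2 - i1 + length W) / 2)"
    using detour_bound[OF g t0 win(1-3)] z by blast
  also have "\<dots> \<le> max (9 * M\<^sup>2) (M * (6 * real r + L) / 2)"
  proof (intro max.mono order_refl divide_right_mono mult_left_mono)
    show "real (i2 - i1 + length W) \<le> 6 * real r + L"
      using win(4) c1(2) c2(2) \<omega>(2) by (simp add: W_def)
  qed (use M_ge_1 in auto)
  finally show ?thesis .
qed

lemma (in complex2) farthest_from_set:
  assumes g: "geod X u v \<alpha>" and S: "finite S" "u \<in> S" "v \<in> S" "\<forall>s\<in>S. reachable X u s"
  obtains t0 r where "t0 \<le> length \<alpha>" "\<forall>t\<le>length \<alpha>. set_dist X S (pvert X u \<alpha> t) \<le> r"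
    "\<forall>s\<in>S. reachable X s (pvert X u \<alpha> t0) \<and> r \<le> vdist X s (pvert X u \<alpha> t0)"
    "r \<le> t0" "t0 + r \<le> length \<alpha>"
proof -
  have p: "path_from X u v \<alpha>" using g by (simp add: geod_def)
  let ?n = "length \<alpha>" and ?h = "\<lambda>t. set_dist X S (pvert X u \<alpha> t)"
  obtain t0 where t0: "t0 \<le> ?n" and h_max: "\<forall>t\<le>?n. ?h t \<le> ?h t0"
    using ex_has_greatest_nat[of "\<lambda>t. t \<le> ?n" 0 ?h "Max (?h ` {..?n}) + 1"]
    by (auto simp: le_imp_less_Suc)
  let ?z = "pvert X u \<alpha> t0"
  have Sz: "\<forall>s\<in>S. reachable X s ?z \<and> ?h t0 \<le> vdist X s ?z"
  proof
    fix s assume s: "s \<in> S"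
    have zs: "reachable X ?z s" using reachable_trans[OF reachable_sym[OF reachable_pvert[OF p t0]]] S(4) s by blast
    show "reachable X s ?z \<and> ?h t0 \<le> vdist X s ?z"
      using set_dist_le[OF S(1) s, of X ?z] vdist_sym[OF zs] reachable_sym[OF zs] by simp
  qed
  have "vdist X u ?z = t0" using geod_vdist_pvert[OF g _ t0, of 0] by simp
  then have "?h t0 \<le> t0" using Sz S(2) by fastforce
  have "vdist X ?z v = ?n - t0" using geod_vdist_pvert[OF g t0 order_refl] path_from_pvert_end[OF p] by simp
  then have "t0 + ?h t0 \<le> ?n" using Sz S(3) t0 vdist_sym[of v ?z] by fastforce
  then show ?thesis using that t0 h_max Sz \<open>?h t0 \<le> t0\<close> by blast
qed

text \<open>Take the vertex \<open>z = \<alpha>(t0)\<close> of \<open>\<alpha>\<close> farthest from \<open>S\<close>, at distance \<open>r\<close>. The stretch of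
  \<open>\<alpha>\<close> within \<open>2r\<close> of \<open>t0\<close> is closed up through \<open>S\<close> by a loop avoiding the \<open>r\<close>-ball around
  \<open>z\<close>, so \<open>detour_bound\<close> bounds \<open>r\<close>, provided \<open>S\<close>-points near \<open>z\<close> can be joined around
  that ball by paths of length \<open>\<Lambda> r\<close>.\<close>

lemma geod_near_set:
  assumes g: "geod X u v \<alpha>" and S: "finite S" "u \<in> S" "v \<in> S" "\<forall>s\<in>S. reachable X u s"
    and detour: "\<And>z r x y. \<forall>s\<in>S. reachable X s z \<and> r \<le> vdist X s z \<Longrightarrow> x \<in> S \<Longrightarrow> y \<in> S \<Longrightarrow>
              vdist X x z \<le> 3 * r \<Longrightarrow> vdist X y z \<le> 3 * r \<Longrightarrow>
              \<exists>\<omega>. path_from X y x \<omega> \<and> real (length \<omega>) \<le> \<Lambda> r \<and> avoids X z r y \<omega>"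
  shows "\<exists>r. (\<forall>t\<le>length \<alpha>. set_dist X S (pvert X u \<alpha> t) \<le> r) \<and>
             (real r)\<^sup>2 \<le> max (9 * M\<^sup>2) (M * (6 * real r + \<Lambda> r) / 2)"
proof -
  have p: "path_from X u v \<alpha>" using g by (simp add: geod_def)
  let ?n = "length \<alpha>" and ?h = "\<lambda>t. set_dist X S (pvert X u \<alpha> t)"
  obtain t0 r where t0: "t0 \<le> ?n" and h_le: "\<forall>t\<le>?n. ?h t \<le> r"
    and Sz: "\<forall>s\<in>S. reachable X s (pvert X u \<alpha> t0) \<and> r \<le> vdist X s (pvert X u \<alpha> t0)"
    and r: "r \<le> t0" "t0 + r \<le> ?n"
    using farthest_from_set[OF g S] by blast
  define z where "z = pvert X u \<alpha> t0"
  define i1 where "i1 = t0 - 2 * r"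
  define i2 where "i2 = min ?n (t0 + 2 * r)"
  have i: "i1 \<le> ?n" "i2 \<le> ?n" using t0 by (simp_all add: i1_def i2_def)
  have reach: "reachable X (pvert X u \<alpha> t) s" if "t \<le> ?n" "s \<in> S" for t s
    using reachable_trans[OF reachable_sym[OF reachable_pvert[OF p that(1)]]] S(4) that(2) by blast
  have iz: "reachable X (pvert X u \<alpha> t) z" if "t \<le> ?n" for t
    using reachable_trans[OF reach[OF that S(2)]] Sz S(2) by (simp add: z_def)
  have dist_z: "vdist X (pvert X u \<alpha> t) z = (if t \<le> t0 then t0 - t else t - t0)" if "t \<le> ?n" for t
  proof -
    have "real (vdist X (pvert X u \<alpha> t) z) = real (if t \<le> t0 then t0 - t else t - t0)"
      using geod_vdist_pvert_abs[OF g that t0] by (simp add: z_def of_nat_diff)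
    then show ?thesis by (simp only: of_nat_eq_iff)
  qed
  have u0: "?h 0 = 0" using set_dist_eq_0[OF S(1,2)] pvert_in_verts[OF p, of 0] by simp
  have vn: "?h ?n = 0"
    using set_dist_eq_0[OF S(1,3)] pvert_in_verts[OF p, of ?n] path_from_pvert_end[OF p] by simp
  have "vdist X (pvert X u \<alpha> i1) z = t0 - i1" using dist_z[OF i(1)] by (simp add: i1_def)
  then have az: "?h i1 + r \<le> vdist X (pvert X u \<alpha> i1) z" "vdist X (pvert X u \<alpha> i1) z \<le> 2 * r"
    using h_le[rule_format, OF i(1)] u0 r by (cases "2 * r \<le> t0"; simp add: i1_def)+
  have "t0 \<le> i2" using r by (simp add: i2_def)
  then have "vdist X (pvert X u \<alpha> i2) z = i2 - t0" using dist_z[OF i(2)] by simp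
  then have bz: "?h i2 + r \<le> vdist X (pvert X u \<alpha> i2) z" "vdist X (pvert X u \<alpha> i2) z \<le> 2 * r"
    using h_le[rule_format, OF i(2)] vn r by (cases "t0 + 2 * r \<le> ?n"; simp add: i2_def)+
  obtain x c2 where x: "x \<in> S" "vdist X x z \<le> 3 * r"
    and c2: "path_from X (pvert X u \<alpha> i1) x c2" "length c2 \<le> r" "avoids X z r (pvert X u \<alpha> i1) c2"
    using nearest_connector[OF S(1) _ _ iz[OF i(1)] _ az] h_le i(1) reach[OF i(1)] S(2) by blast
  obtain y c1 where y: "y \<in> S" "vdist X y z \<le> 3 * r"
    and c1: "path_from X (pvert X u \<alpha> i2) y c1" "length c1 \<le> r" "avoids X z r (pvert X u \<alpha> i2) c1"
    using nearest_connector[OF S(1) _ _ iz[OF i(2)] _ bz] h_le i(2) reach[OF i(2)] S(2) by blast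
  obtain \<omega> where "path_from X y x \<omega>" "real (length \<omega>) \<le> \<Lambda> r" "avoids X z r y \<omega>"
    using detour[OF Sz[folded z_def] x(1) y(1) x(2) y(2)] by blast
  with window_bound[OF g t0 z_def _ _ _ _ c1 c2] r
  have "(real r)\<^sup>2 \<le> max (9 * M\<^sup>2) (M * (6 * real r + \<Lambda> r) / 2)" by (auto simp: i1_def i2_def)
  then show ?thesis using h_le by blast
qed

end

context complex2
begin

lemma detour_along_geod:
  assumes g: "geod X a b c" and x: "x \<in> path_verts X a c" and y: "y \<in> path_verts X a c"
    and S: "path_verts X a c \<subseteq> S" "\<forall>s\<in>S. reachable X s z \<and> r \<le> vdist X s z"
  shows "\<exists>\<omega>. path_from X y x \<omega> \<and> length \<omega> = vdist X y x \<and> avoids X z r y \<omega>"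
  using geod_segment[OF g x y] avoids_subset[of X y _ S z r] S by blast

lemma detour_via_corner:
  assumes \<beta>: "geod X a w \<beta>" and \<gamma>: "geod X w b \<gamma>"
    and y: "y \<in> path_verts X a \<beta>" and x: "x \<in> path_verts X w \<gamma>"
    and S: "path_verts X a \<beta> \<union> path_verts X w \<gamma> \<subseteq> S" "\<forall>s\<in>S. reachable X s z \<and> r \<le> vdist X s z"
  shows "\<exists>\<omega>. path_from X y x \<omega> \<and> length \<omega> = vdist X y w + vdist X w x \<and> avoids X z r y \<omega>"
proof -
  have w: "w \<in> path_verts X a \<beta>" "w \<in> path_verts X w \<gamma>"
    using path_verts_end[of X a w \<beta>] \<beta> path_verts_start by (auto simp: geod_def)
  obtain \<omega>1 where \<omega>1: "path_from X y w \<omega>1" "length \<omega>1 = vdist X y w" "avoids X z r y \<omega>1"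
    using detour_along_geod[OF \<beta> w(1) y] S by blast
  obtain \<omega>2 where \<omega>2: "path_from X w x \<omega>2" "length \<omega>2 = vdist X w x" "avoids X z r w \<omega>2"
    using detour_along_geod[OF \<gamma> x w(2)] S by blast
  show ?thesis
    using path_from_append[OF \<omega>1(1) \<omega>2(1)] avoids_append[OF \<omega>1(1,3) \<omega>2(3)] \<omega>1(2) \<omega>2(2)
    by (intro exI[of _ "\<omega>1 @ \<omega>2"]) simp
qed

text \<open>Points on the same geodesic are joined along it; \<open>cross\<close> is only needed for points on
  different geodesics.\<close>

lemma detour_on_two_geods:
  assumes \<beta>: "geod X a w \<beta>" and \<gamma>: "geod X w b \<gamma>"
    and Sz: "\<forall>s\<in>path_verts X a \<beta> \<union> path_verts X w \<gamma>. reachable X s z \<and> r \<le> vdist X s z"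
    and x: "x \<in> path_verts X a \<beta> \<union> path_verts X w \<gamma>" and y: "y \<in> path_verts X a \<beta> \<union> path_verts X w \<gamma>"
    and xz: "vdist X x z \<le> 3 * r" and yz: "vdist X y z \<le> 3 * r" and L: "6 * real r \<le> L"
    and cross: "\<And>x y. y \<in> path_verts X a \<beta> \<Longrightarrow> x \<in> path_verts X w \<gamma> \<Longrightarrow>
      vdist X x z \<le> 3 * r \<Longrightarrow> vdist X y x \<le> 6 * r \<Longrightarrow>
      \<exists>\<omega>. path_from X y x \<omega> \<and> real (length \<omega>) \<le> L \<and> avoids X z r y \<omega>"
  shows "\<exists>\<omega>. path_from X y x \<omega> \<and> real (length \<omega>) \<le> L \<and> avoids X z r y \<omega>"
proof -
  have xz': "reachable X x z" and yz': "reachable X y z" using Sz x y by blast+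
  have "vdist X y x \<le> vdist X y z + vdist X z x" using vdist_triangle[OF yz' reachable_sym[OF xz']] .
  then have yx: "vdist X y x \<le> 6 * r" using vdist_sym[OF xz'] xz yz by simp
  have xy: "vdist X x y \<le> 6 * r" using yx vdist_sym[OF reachable_common[OF xz' yz']] by simp
  consider "x \<in> path_verts X a \<beta>" "y \<in> path_verts X a \<beta>" | "x \<in> path_verts X w \<gamma>" "y \<in> path_verts X w \<gamma>"
    | "y \<in> path_verts X a \<beta>" "x \<in> path_verts X w \<gamma>" | "x \<in> path_verts X a \<beta>" "y \<in> path_verts X w \<gamma>"
    using x y by blast
  then show ?thesis
  proof cases
    case 1
    then obtain \<omega> where "path_from X y x \<omega>" "length \<omega> = vdist X y x" "avoids X z r y \<omega>"
      using detour_along_geod[OF \<beta> 1(1,2) _ Sz] by blast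
    then show ?thesis using yx L by (intro exI[of _ \<omega>]) simp
  next
    case 2
    then obtain \<omega> where "path_from X y x \<omega>" "length \<omega> = vdist X y x" "avoids X z r y \<omega>"
      using detour_along_geod[OF \<gamma> 2(1,2) _ Sz] by blast
    then show ?thesis using yx L by (intro exI[of _ \<omega>]) simp
  next
    case 3
    then show ?thesis using cross xz yx by blast
  next
    case 4
    obtain \<omega> where \<omega>: "path_from X x y \<omega>" "real (length \<omega>) \<le> L" "avoids X z r x \<omega>"
      using cross[OF 4 yz xy] by blast
    then show ?thesis
      using path_from_rev_path[OF \<omega>(1)] avoids_rev_path[OF \<omega>(1,3)] by (intro exI[of _ "rev_path \<omega>"]) simp
  qed
qed

end

lemma quadratic_radius_bound:
  fixes x M L :: real
  assumes "0 \<le> x" "0 \<le> M" "0 \<le> L" and x: "x\<^sup>2 \<le> max (9 * M\<^sup>2) (M * (6 * x + (6 * x + 2 * L)) / 2)"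
  shows "x \<le> 3 * M + sqrt (9 * M\<^sup>2 + M * L)"
proof (cases "x\<^sup>2 \<le> 9 * M\<^sup>2")
  case True
  then have "x\<^sup>2 \<le> (3 * M)\<^sup>2" by (simp add: power2_eq_square)
  then have "x \<le> 3 * M" by (rule power2_le_imp_le) (use assms(2) in simp)
  then show ?thesis using assms by (simp add: add_increasing2)
next
  case False
  then have "x\<^sup>2 \<le> M * (6 * x + (6 * x + 2 * L)) / 2" using x by (simp add: le_max_iff_disj)
  then have "x\<^sup>2 \<le> 6 * M * x + M * L" by (simp add: algebra_simps)
  then have "(x - 3 * M)\<^sup>2 \<le> 9 * M\<^sup>2 + M * L" by (simp add: power2_eq_square algebra_simps)
  then show ?thesis using real_le_rsqrt by fastforce
qed

context linear_isoperimetry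
begin

lemma geod_near_short_side:
  assumes \<alpha>: "geod X c u \<alpha>" and \<beta>: "geod X c w \<beta>" and \<gamma>: "geod X w u \<gamma>"
  shows "\<exists>r. (\<forall>t\<le>length \<alpha>. set_dist X (path_verts X c \<beta> \<union> path_verts X w \<gamma>) (pvert X c \<alpha> t) \<le> r)
             \<and> real r \<le> 3 * M + sqrt (9 * M\<^sup>2 + M * real (length \<gamma>))"
proof -
  let ?S = "path_verts X c \<beta> \<union> path_verts X w \<gamma>"
  have p\<beta>: "path_from X c w \<beta>" and p\<gamma>: "path_from X w u \<gamma>" using \<beta> \<gamma> by (simp_all add: geod_def)
  have "\<exists>r. (\<forall>t\<le>length \<alpha>. set_dist X ?S (pvert X c \<alpha> t) \<le> r) \<and>
      (real r)\<^sup>2 \<le> max (9 * M\<^sup>2) (M * (6 * real r + (6 * real r + 2 * real (length \<gamma>))) / 2)"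
  proof (rule geod_near_set[OF \<alpha>])
    show "finite ?S" "c \<in> ?S" "u \<in> ?S"
      using path_verts_start path_verts_end[OF p\<gamma>] by auto
    show "\<forall>s\<in>?S. reachable X c s"
      using reachable_path_verts[OF p\<beta>] reachable_trans[OF reachable_path_verts[OF p\<beta> path_verts_end[OF p\<beta>]]
        reachable_path_verts[OF p\<gamma>]] by blast
    fix z r x y
    assume Sz: "\<forall>s\<in>?S. reachable X s z \<and> r \<le> vdist X s z" and x: "x \<in> ?S" and y: "y \<in> ?S"
      and xz: "vdist X x z \<le> 3 * r" and yz: "vdist X y z \<le> 3 * r"
    show "\<exists>\<omega>. path_from X y x \<omega> \<and> real (length \<omega>) \<le> 6 * real r + 2 * real (length \<gamma>) \<and> avoids X z r y \<omega>"
    proof (rule detour_on_two_geods[OF \<beta> \<gamma> Sz x y xz yz])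
      fix x y assume y: "y \<in> path_verts X c \<beta>" and x: "x \<in> path_verts X w \<gamma>"
        and "vdist X x z \<le> 3 * r" and yx: "vdist X y x \<le> 6 * r"
      obtain \<omega> where \<omega>: "path_from X y x \<omega>" "length \<omega> = vdist X y w + vdist X w x" "avoids X z r y \<omega>"
        using detour_via_corner[OF \<beta> \<gamma> y x _ Sz] by blast
      have w: "w \<in> ?S" using path_verts_start[of w X \<gamma>] by blast
      have reach: "reachable X s s'" if "s \<in> ?S" "s' \<in> ?S" for s s'
        using reachable_common Sz that by blast
      have "vdist X w x \<le> length \<gamma>" using vdist_path_verts_start[OF p\<gamma> x] .
      moreover have "vdist X y w \<le> vdist X y x + vdist X x w" using vdist_triangle[OF reach reach] x y w by blast
      moreover have "vdist X x w = vdist X w x" using vdist_sym[OF reach] x w by blast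
      ultimately show "\<exists>\<omega>. path_from X y x \<omega> \<and> real (length \<omega>) \<le> 6 * real r + 2 * real (length \<gamma>)
          \<and> avoids X z r y \<omega>"
        using \<omega> yx by (intro exI[of _ \<omega>]) simp
    qed simp
  qed
  then obtain r where "\<forall>t\<le>length \<alpha>. set_dist X ?S (pvert X c \<alpha> t) \<le> r"
    and "(real r)\<^sup>2 \<le> max (9 * M\<^sup>2) (M * (6 * real r + (6 * real r + 2 * real (length \<gamma>))) / 2)"
    by blast
  then show ?thesis using quadratic_radius_bound M_ge_1 by auto
qed

end

section \<open>Geodesic triangles\<close>

context linear_isoperimetry
begin

definition side_radius :: "nat \<Rightarrow> real" where
  "side_radius r = 3 * M + sqrt (9 * M\<^sup>2 + 6 * M * real r)"

lemma side_radius_nonneg: "0 \<le> side_radius r"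
  using M_ge_1 by (simp add: side_radius_def)

text \<open>If \<open>u' = C(j)\<close> is farther than \<open>K\<close> from the corner \<open>c\<close>, the point \<open>x = C(j - K)\<close> lies within
  \<open>side_radius r\<close> of the side \<open>B\<close>: \<open>geod_near_short_side\<close> applies to the triangle \<open>c, u', w'\<close> whose
  side \<open>w' u'\<close> is short, and \<open>x\<close> is too far from \<open>u'\<close> to be near that side.\<close>

lemma shortcut_near_side:
  assumes B: "geod X b c B" and C: "geod X c a C" and i: "i \<le> length B" and j: "j \<le> length C"
    and K: "K \<le> j" "6 * real r + side_radius r + 1 \<le> real K"
    and w'u': "vdist X (pvert X b B i) (pvert X c C j) \<le> 6 * r"
    and far: "\<forall>s\<in>path_verts X b B \<union> path_verts X c C. reachable X s z \<and> r \<le> vdist X s z"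
  shows "\<exists>s\<in>path_verts X b B. real (vdist X (pvert X c C (j - K)) s) \<le> side_radius r"
proof -
  let ?w = "pvert X b B i" and ?u = "pvert X c C j" and ?x = "pvert X c C (j - K)" and ?D = "side_radius r"
  have pB: "path_from X b c B" using B by (simp add: geod_def)
  have in_B: "?w \<in> path_verts X b B" by (rule path_verts_pvert[OF i])
  have in_C: "?u \<in> path_verts X c C" "?x \<in> path_verts X c C" using j by (simp_all add: path_verts_pvert)
  have wz: "reachable X ?w z" and uz: "reachable X ?u z" and xz: "reachable X ?x z"
    using far in_B in_C by blast+
  have wu: "reachable X ?w ?u" using reachable_common[OF wz uz] .
  obtain \<gamma> where \<gamma>: "geod X ?w ?u \<gamma>" using geod_exists[OF wu] by blast
  have \<alpha>: "geod X c ?u (take j C)" using geod_take[OF C j] .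
  have \<beta>: "geod X c ?w (rev_path (drop i B))"
    using geod_rev_path[OF geod_drop[OF B i]] path_from_pvert_end[OF pB] by simp
  have \<beta>_in_B: "path_verts X c (rev_path (drop i B)) \<subseteq> path_verts X b B"
    using path_verts_rev_path[OF path_from_drop[OF pB i]] path_verts_drop[OF i] path_from_pvert_end[OF pB]
    by simp
  let ?S = "path_verts X c (rev_path (drop i B)) \<union> path_verts X ?w \<gamma>"
  obtain r' where cover: "\<forall>t\<le>length (take j C). set_dist X ?S (pvert X c (take j C) t) \<le> r'"
    and r': "real r' \<le> 3 * M + sqrt (9 * M\<^sup>2 + M * real (length \<gamma>))"
    using geod_near_short_side[OF \<alpha> \<beta> \<gamma>] by blast
  have "M * real (length \<gamma>) \<le> M * (6 * real r)"
    using \<gamma> w'u' M_ge_1 by (intro mult_left_mono) (auto simp: geod_def)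
  then have "sqrt (9 * M\<^sup>2 + M * real (length \<gamma>)) \<le> sqrt (9 * M\<^sup>2 + 6 * M * real r)"
    by (intro real_sqrt_le_mono) (simp add: algebra_simps)
  then have r'D: "real r' \<le> ?D" unfolding side_radius_def using r' by linarith
  obtain s where s: "s \<in> ?S" "vdist X ?x s \<le> r'"
  proof -
    have "set_dist X ?S ?x \<le> r'"
      using cover[rule_format, of "j - K"] pvert_take[of "j - K" j C X c] j by simp
    moreover have "?S \<noteq> {}" using path_verts_start[of c X "rev_path (drop i B)"] by blast
    ultimately show ?thesis using set_dist_attained[of ?S X ?x] that by fastforce
  qed
  have xu: "vdist X ?x ?u = K" using geod_vdist_pvert[OF C, of "j - K" j] K j by simp
  have s_B: "s \<in> path_verts X b B"
  proof (rule ccontr)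
    assume "s \<notin> path_verts X b B"
    then have s\<gamma>: "s \<in> path_verts X ?w \<gamma>" using s(1) \<beta>_in_B by blast
    then have "vdist X s ?u \<le> 6 * r"
      using vdist_path_verts_end[of ?w ?u \<gamma> s] \<gamma> w'u' by (auto simp: geod_def)
    moreover have "reachable X s z"
      using reachable_trans[OF reachable_sym[OF reachable_path_verts[of ?w ?u \<gamma> s]] wz] s\<gamma> \<gamma>
      by (simp add: geod_def)
    then have "reachable X ?x s" "reachable X s ?u" using reachable_common xz uz by blast+
    ultimately have "real K \<le> real r' + 6 * real r" using vdist_triangle[of ?x s ?u] xu s(2) by simp
    then show False using K(2) r'D by linarith
  qed
  then show ?thesis using s(2) r'D by force
qed

text \<open>Joining \<open>w' = B(i)\<close> to \<open>u' = C(j)\<close> around the \<open>r\<close>-ball at \<open>z\<close> when \<open>u'\<close> is far from the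
  corner \<open>c\<close>: run along \<open>B\<close> to the point nearest \<open>C(j - K)\<close>, jump there and continue along \<open>C\<close>.\<close>

lemma detour_via_shortcut:
  assumes B: "geod X b c B" and C: "geod X c a C" and i: "i \<le> length B" and j: "j \<le> length C"
    and K: "K \<le> j" "6 * real r + side_radius r + 1 \<le> real K"
    and u'z: "vdist X (pvert X c C j) z \<le> 3 * r"
    and w'u': "vdist X (pvert X b B i) (pvert X c C j) \<le> 6 * r"
    and far: "\<forall>s\<in>path_verts X b B \<union> path_verts X c C. reachable X s z \<and> r \<le> vdist X s z"
  shows "\<exists>\<omega>. path_from X (pvert X b B i) (pvert X c C j) \<omega>
          \<and> real (length \<omega>) \<le> 6 * real r + 2 * real K + 2 * side_radius r \<and> avoids X z r (pvert X b B i) \<omega>"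
proof -
  let ?w = "pvert X b B i" and ?u = "pvert X c C j" and ?x = "pvert X c C (j - K)" and ?D = "side_radius r"
  obtain s where s_B: "s \<in> path_verts X b B" and sD: "real (vdist X ?x s) \<le> ?D"
    using shortcut_near_side[OF B C i j K w'u' far] by blast
  have in_B: "?w \<in> path_verts X b B" by (rule path_verts_pvert[OF i])
  have in_C: "?u \<in> path_verts X c C" "?x \<in> path_verts X c C" using j by (simp_all add: path_verts_pvert)
  have wz: "reachable X ?w z" and uz: "reachable X ?u z" and xz: "reachable X ?x z"
    using far in_B in_C by blast+
  have wu: "reachable X ?w ?u" using reachable_common[OF wz uz] .
  have xu: "vdist X ?x ?u = K" using geod_vdist_pvert[OF C, of "j - K" j] K j by simp
  have sz: "reachable X s z" using far s_B by blast
  obtain J where J: "geod X s ?x J" using geod_exists[OF reachable_common[OF sz xz]] by blast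
  have lenJ: "length J = vdist X ?x s"
    using J vdist_sym[OF reachable_common[OF sz xz]] by (simp add: geod_def)
  have "vdist X ?x ?u \<le> vdist X ?x z + vdist X z ?u"
    using vdist_triangle[OF xz reachable_sym[OF uz]] .
  then have "real K \<le> real (vdist X ?x z) + 3 * real r"
    using xu vdist_sym[OF uz] u'z by simp
  then have "avoids X z r s J"
    using avoids_far_end[of s ?x J z r] J xz K(2) lenJ sD by (simp add: geod_def)
  moreover obtain \<omega>1 where \<omega>1: "path_from X ?w s \<omega>1" "length \<omega>1 = vdist X ?w s" "avoids X z r ?w \<omega>1"
    using detour_along_geod[OF B s_B in_B _ far] by blast
  moreover obtain \<omega>3 where \<omega>3: "path_from X ?x ?u \<omega>3" "length \<omega>3 = vdist X ?x ?u" "avoids X z r ?x \<omega>3"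
    using detour_along_geod[OF C in_C _ far] by blast
  moreover have "vdist X ?w s \<le> vdist X ?w ?u + vdist X ?u ?x + vdist X ?x s"
    using vdist_triangle[OF wu reachable_common[OF uz sz]]
      vdist_triangle[OF reachable_common[OF uz xz] reachable_common[OF xz sz]]
    by linarith
  moreover have "vdist X ?u ?x = K" using xu vdist_sym[OF reachable_common[OF xz uz]] by simp
  ultimately have "length (\<omega>1 @ J @ \<omega>3) \<le> 6 * r + 2 * K + 2 * vdist X ?x s"
    using lenJ xu w'u' by simp
  then have "real (length (\<omega>1 @ J @ \<omega>3)) \<le> 6 * real r + 2 * real K + 2 * ?D"
    using sD by linarith
  moreover have "path_from X ?w ?u (\<omega>1 @ J @ \<omega>3)"
    using path_from_append[OF \<omega>1(1) path_from_append[OF _ \<omega>3(1)]] J by (simp add: geod_def)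
  moreover have "avoids X z r ?w (\<omega>1 @ J @ \<omega>3)"
    using avoids_append[OF \<omega>1(1,3) avoids_append[OF _ \<open>avoids X z r s J\<close> \<omega>3(3)]] J by (simp add: geod_def)
  ultimately show ?thesis by blast
qed

end

context linear_isoperimetry
begin

lemma triangle_detour:
  assumes B: "geod X b c B" and C: "geod X c a C"
    and w': "w' \<in> path_verts X b B" and u': "u' \<in> path_verts X c C"
    and u'z: "vdist X u' z \<le> 3 * r" and w'u': "vdist X w' u' \<le> 6 * r"
    and far: "\<forall>s\<in>path_verts X b B \<union> path_verts X c C. reachable X s z \<and> r \<le> vdist X s z"
  shows "\<exists>\<omega>. path_from X w' u' \<omega> \<and> real (length \<omega>) \<le> 18 * real r + 4 * side_radius r + 4
            \<and> avoids X z r w' \<omega>"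
proof -
  obtain i where i: "i \<le> length B" "w' = pvert X b B i" using w' by (rule path_verts_cases)
  obtain j where j: "j \<le> length C" "u' = pvert X c C j" using u' by (rule path_verts_cases)
  define K where "K = nat \<lceil>6 * real r + side_radius r\<rceil> + 1"
  have K: "6 * real r + side_radius r + 1 \<le> real K" "real K \<le> 6 * real r + side_radius r + 2"
    using side_radius_nonneg[of r] by (simp_all add: K_def) linarith+
  show ?thesis
  proof (cases "K \<le> j")
    case True
    obtain \<omega> where "path_from X w' u' \<omega>" "avoids X z r w' \<omega>"
      and "real (length \<omega>) \<le> 6 * real r + 2 * real K + 2 * side_radius r"
      using detour_via_shortcut[OF B C i(1) j(1) True K(1)] u'z w'u' far i(2) j(2) by blast
    then show ?thesis using K(2) by (intro exI[of _ \<omega>]) simp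
  next
    case False
    have pB: "path_from X b c B" using B by (simp add: geod_def)
    have c: "c \<in> path_verts X c C" using path_verts_start .
    have reach: "reachable X s s'" if "s \<in> path_verts X b B \<union> path_verts X c C"
      "s' \<in> path_verts X b B \<union> path_verts X c C" for s s'
      using reachable_common far that by blast
    obtain \<omega> where \<omega>: "path_from X w' u' \<omega>" "length \<omega> = vdist X w' c + vdist X c u'" "avoids X z r w' \<omega>"
      using detour_via_corner[OF B C w' u' _ far] by blast
    have cu': "vdist X c u' = j" using geod_vdist_pvert[OF C, of 0 j] j by simp
    have "vdist X w' c \<le> vdist X w' u' + vdist X u' c" using vdist_triangle[OF reach reach] w' u' c by blast
    moreover have "vdist X u' c = j" using cu' vdist_sym[OF reach[of c u']] u' c by simp
    ultimately have "length \<omega> \<le> 6 * r + 2 * j" using \<omega>(2) cu' w'u' by simp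
    then have "real (length \<omega>) \<le> 6 * real r + 2 * real K" using False by linarith
    then show ?thesis using \<omega> K(2) side_radius_nonneg[of r] by (intro exI[of _ \<omega>]) simp
  qed
qed

end

lemma radius_bound:
  fixes r M :: real
  assumes r: "0 \<le> r" and M: "1 \<le> M"
    and h: "r\<^sup>2 \<le> max (9 * M\<^sup>2) (M * (6 * r + (18 * r + 4 * (3 * M + sqrt (9 * M\<^sup>2 + 6 * M * r)) + 4)) / 2)"
  shows "r < 15 * M"
proof (rule ccontr)
  assume "\<not> r < 15 * M"
  then have r15: "15 * M \<le> r" by simp
  define s where "s = sqrt (9 * M\<^sup>2 + 6 * M * r)"
  have "s \<le> 3 * M + r"
    using r M unfolding s_def by (intro real_le_lsqrt) (simp_all add: power2_eq_square algebra_simps)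
  then have Ms: "M * s \<le> M * (3 * M + r)" using M by (intro mult_left_mono) auto
  have MM: "1 \<le> M * M" using M mult_mono[OF M M] by simp
  have rr: "(15 * M) * (15 * M) \<le> r * r" using r15 M by (intro mult_mono) auto
  then have "\<not> r\<^sup>2 \<le> 9 * M\<^sup>2" using MM by (simp add: power2_eq_square)
  then have "r * r \<le> M * (6 * r + (18 * r + 4 * (3 * M + s) + 4)) / 2"
    using h by (simp add: s_def power2_eq_square)
  then have "r * r \<le> 14 * (M * r) + 12 * (M * M) + 2 * M" using Ms by (simp add: algebra_simps)
  moreover have "(15 * M) * M \<le> r * (r - 14 * M)" using r15 M by (intro mult_mono) auto
  then have "15 * (M * M) \<le> r * r - 14 * (M * r)" by (simp add: algebra_simps)
  moreover have "M \<le> M * M" using M by simp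
  ultimately show False using MM by linarith
qed

context linear_isoperimetry
begin

lemma triangle_side_near:
  assumes A: "geod X a b A" and B: "geod X b c B" and C: "geod X c a C" and t: "t \<le> length A"
  shows "real (set_dist X (path_verts X b B \<union> path_verts X c C) (pvert X a A t)) < 15 * M"
proof -
  let ?S = "path_verts X b B \<union> path_verts X c C" and ?\<Lambda> = "\<lambda>r. 18 * real r + 4 * side_radius r + 4"
  have pA: "path_from X a b A" and pB: "path_from X b c B" and pC: "path_from X c a C"
    using A B C by (simp_all add: geod_def)
  have "\<exists>r. (\<forall>t\<le>length A. set_dist X ?S (pvert X a A t) \<le> r) \<and>
      (real r)\<^sup>2 \<le> max (9 * M\<^sup>2) (M * (6 * real r + ?\<Lambda> r) / 2)"
  proof (rule geod_near_set[OF A])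
    show "finite ?S" "a \<in> ?S" "b \<in> ?S"
      using path_verts_start path_verts_end[OF pC] by auto
    show "\<forall>s\<in>?S. reachable X a s"
      using reachable_trans[OF reachable_path_verts[OF pA path_verts_end[OF pA]] reachable_path_verts[OF pB]]
        reachable_trans[OF reachable_sym[OF reachable_path_verts[OF pC path_verts_end[OF pC]]]
          reachable_path_verts[OF pC]] by blast
    fix z r x y
    assume Sz: "\<forall>s\<in>?S. reachable X s z \<and> r \<le> vdist X s z" and x: "x \<in> ?S" and y: "y \<in> ?S"
      and xz: "vdist X x z \<le> 3 * r" and yz: "vdist X y z \<le> 3 * r"
    show "\<exists>\<omega>. path_from X y x \<omega> \<and> real (length \<omega>) \<le> ?\<Lambda> r \<and> avoids X z r y \<omega>"
      using detour_on_two_geods[OF B C Sz x y xz yz _ triangle_detour[OF B C _ _ _ _ Sz]]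
        side_radius_nonneg[of r] by simp
  qed
  then obtain r where cover: "\<forall>t\<le>length A. set_dist X ?S (pvert X a A t) \<le> r"
    and "(real r)\<^sup>2 \<le> max (9 * M\<^sup>2) (M * (6 * real r + ?\<Lambda> r) / 2)" by blast
  then have "real r < 15 * M" using M_ge_1 by (intro radius_bound) (simp_all add: side_radius_def)
  then show ?thesis using cover t by (meson le_less_trans of_nat_le_iff)
qed

end

lemma pdist_le_anchors:
  assumes "(p, o1) \<in> anchors X x" "(q, o2) \<in> anchors X y"
  shows "pdist X x y \<le> ereal o1 + gdist X p q + ereal o2"
  unfolding pdist_def by (rule min.coboundedI2, rule Inf_lower) (use assms in blast)

lemma Vx_path_verts_in_path_pts: "s \<in> path_verts X b B \<Longrightarrow> Vx s \<in> path_pts X b B"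
proof (erule path_verts_cases)
  fix k assume k: "k \<le> length B" "s = pvert X b B k"
  show ?thesis
  proof (cases k)
    case (Suc j)
    then have "s = dtgt X (B ! j)" "B ! j \<in> set B" using k by (auto simp: pvert_Suc)
    then show ?thesis unfolding path_pts_def by blast
  qed (use k in \<open>simp add: path_pts_def\<close>)
qed

lemma (in complex2) path_pts_anchor:
  assumes p: "path_from X a b A" and x: "x \<in> path_pts X a A"
  shows "\<exists>q\<in>path_verts X a A. \<exists>t. (q, t) \<in> anchors X x \<and> 0 \<le> t \<and> t \<le> 1"
proof -
  have ends: "dsrc X d \<in> path_verts X a A" "dtgt X d \<in> path_verts X a A" if d: "d \<in> set A" for d
  proof -
    obtain k where k: "k < length A" "d = A ! k" using d by (auto simp: in_set_conv_nth)
    then show "dsrc X d \<in> path_verts X a A" "dtgt X d \<in> path_verts X a A"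
      using path_from_dsrc[OF p k(1)] pvert_Suc[of X a A k, symmetric] path_verts_pvert[of k A X a]
        path_verts_pvert[of "Suc k" A X a] by simp_all
  qed
  have vertex: "(q, 0) \<in> anchors X (Vx q)" for q by (simp add: anchors_def)
  from x consider "x = Vx a" | d where "d \<in> set A" "x = Vx (dsrc X d)" | d where "d \<in> set A" "x = Vx (dtgt X d)"
    | d t where "d \<in> set A" "x = Ip (fst d) t" "0 < t" "t < 1"
    unfolding path_pts_def by blast
  then show ?thesis
  proof cases
    case 1
    then show ?thesis using vertex[of a] path_verts_start[of a X A] by fastforce
  next
    case (2 d)
    then show ?thesis using vertex[of "dsrc X d"] ends(1)[of d] by fastforce
  next
    case (3 d)
    then show ?thesis using vertex[of "dtgt X d"] ends(2)[of d] by fastforce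
  next
    case (4 d t)
    have "fst (ends X (fst d)) = (if snd d then dsrc X d else dtgt X d)" by (simp add: dsrc_def dtgt_def)
    then have "fst (ends X (fst d)) \<in> path_verts X a A" using ends[OF 4(1)] by simp
    moreover have "(fst (ends X (fst d)), t) \<in> anchors X x" using 4 by (simp add: anchors_def)
    ultimately show ?thesis using 4(3,4) by fastforce
  qed
qed

lemma (in linear_isoperimetry) triangle_side_thin:
  assumes A: "geod X a b A" and B: "geod X b c B" and C: "geod X c a C" and \<delta>: "1 + 15 * M \<le> \<delta>"
  shows "\<forall>x\<in>path_pts X a A. \<exists>y\<in>path_pts X b B \<union> path_pts X c C. pdist X x y \<le> ereal \<delta>"
proof
  fix x assume x: "x \<in> path_pts X a A"
  let ?S = "path_verts X b B \<union> path_verts X c C"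
  have pA: "path_from X a b A" and pB: "path_from X b c B" and pC: "path_from X c a C"
    using A B C by (simp_all add: geod_def)
  obtain q t where q: "q \<in> path_verts X a A" and qt: "(q, t) \<in> anchors X x" "0 \<le> t" "t \<le> 1"
    using path_pts_anchor[OF pA x] by blast
  obtain k where k: "k \<le> length A" "q = pvert X a A k" using q by (rule path_verts_cases)
  have "\<exists>s\<in>?S. vdist X q s = set_dist X ?S q"
    by (rule set_dist_attained) (use path_verts_start[of b X B] in auto)
  then obtain s where s: "s \<in> ?S" "vdist X q s = set_dist X ?S q" by blast
  have as: "reachable X a s"
  proof (cases "s \<in> path_verts X b B")
    case True
    then show ?thesis
      using reachable_trans[OF reachable_path_verts[OF pA path_verts_end[OF pA]] reachable_path_verts[OF pB]]
      by blast
  next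
    case False
    then have "s \<in> path_verts X c C" using s(1) by blast
    then show ?thesis
      using reachable_trans[OF reachable_sym[OF reachable_path_verts[OF pC path_verts_end[OF pC]]]
          reachable_path_verts[OF pC]] by blast
  qed
  have "gdist X q s = ereal (vdist X q s)"
    using gdist_eq_vdist reachable_trans[OF reachable_sym[OF reachable_path_verts[OF pA q]] as] by blast
  moreover have "real (vdist X q s) < 15 * M" using triangle_side_near[OF A B C k(1)] s k(2) by simp
  ultimately have "pdist X x (Vx s) \<le> ereal (t + real (vdist X q s))"
    using pdist_le_anchors[OF qt(1), of s 0 "Vx s"] by (simp add: anchors_def)
  also have "\<dots> \<le> ereal \<delta>" using \<open>real (vdist X q s) < 15 * M\<close> qt(3) \<delta> by simp
  finally have "pdist X x (Vx s) \<le> ereal \<delta>" .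
  moreover have "Vx s \<in> path_pts X b B \<union> path_pts X c C"
    using s(1) Vx_path_verts_in_path_pts[of s X b B] Vx_path_verts_in_path_pts[of s X c C] by blast
  ultimately show "\<exists>y\<in>path_pts X b B \<union> path_pts X c C. pdist X x y \<le> ereal \<delta>" by blast
qed

theorem theorem4p7:
  fixes X :: "('v,'e,'f) cx" and N :: nat and \<kappa> :: real
  assumes "two_complex X"
    and "0 < N"
    and "\<forall>f\<in>faces X. length (bdry X f) \<le> N"
    and "\<kappa> > 1 / real N"
    and "\<forall>\<gamma>. is_loop X \<gamma> \<longrightarrow> area X \<gamma> \<ge> ereal (18 * \<kappa>^2 * (real N)^2)
            \<longrightarrow> area X \<gamma> \<le> ereal (\<kappa> * real (length \<gamma>))"
  shows "\<forall>a b c pab pbc pca. geodesic_triangle X a b c pab pbc pca \<longrightarrow>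
            thin_triangle X (120 * \<kappa>^2 * (real N)^3) a b c pab pbc pca"
proof (intro allI impI)
  fix a b c pab pbc pca
  assume "geodesic_triangle X a b c pab pbc pca"
  interpret linear_isoperimetry X "\<kappa> * (real N)\<^sup>2"
    by (rule linear_isoperimetry_of_area_bound[OF assms])
  have g: "geod X a b pab" "geod X b c pbc" "geod X c a pca"
    using \<open>geodesic_triangle X a b c pab pbc pca\<close> by (auto simp: geodesic_triangle_def geodesic_iff_geod)
  have "1 < \<kappa> * real N" using assms(2,4) by (simp add: field_simps)
  then have "\<kappa> * (real N)\<^sup>2 * 1 \<le> \<kappa> * (real N)\<^sup>2 * (\<kappa> * real N)"
    using M_ge_1 by (intro mult_left_mono) auto
  then have "1 + 15 * (\<kappa> * (real N)\<^sup>2) \<le> 120 * \<kappa>^2 * (real N)^3"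
    using M_ge_1 by (simp add: power2_eq_square power3_eq_cube algebra_simps)
  then show "thin_triangle X (120 * \<kappa>^2 * (real N)^3) a b c pab pbc pca"
    unfolding thin_triangle_def
    using triangle_side_thin[OF g(1,2,3)] triangle_side_thin[OF g(2,3,1)] triangle_side_thin[OF g(3,1,2)]
    by blast
qed

end
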